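(* Let $g(n,k)$ be the number of $k$-faces of $I(\mathfrak{gl}_n,V\oplus\bigwedge^2)$ for $n,k\ge0$, with $g(n,k)=0$ for $n<0$ and for $k\notin[0,n]$. Then for all $n\ge0$ and all $k$, \[ g(n,k)=\delta_{k,0}+\sum_{\ell=1}^{n-k+1}(\ell+1)\,g(n-\ell,k-1). \]
   Context: Identify the diagonal Cartan subalgebra of $\mathfrak{gl}_n$ with $\mathbb{R}^n$ with coordinates $x_1,\dots,x_n$. Let $W=\{x_1\ge\cdots\ge x_n\}$ and $W^0=\{x_1>\cdots>x_n\}$. For $1\le i\le j\le n$ let $\lambda_{i,j}^\perp$ be the hyperplane $x_i+x_j=0$ (for $i=j$: $x_i=0$); $I(\mathfrak{gl}_n,V\oplus\bigwedge^2)$ is the arrangement of these hyperplanes restricted to $W$. Chambers are the closures of the connected components of $W^0\setminus\bigcup\lambda_{i,j}^\perp$; a face is a chamber or the intersection of a chamber with a supporting hyperplane; a $k$-face is a face whose linear span has dimension $k$. $\delta$ is the Kronecker delta. *)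

theory Defs
  imports "HOL-Analysis.Analysis"
begin

text \<open>R^n is modelled as the functions x :: nat => real vanishing outside {0..<n};
  coordinate x_i of the paper (i = 1..n) is x (i - 1). The topology is the product
  topology on nat => real, which on these points is the Euclidean topology of R^n.\<close>

definition Rn :: "nat \<Rightarrow> (nat \<Rightarrow> real) set" where
  "Rn n = {x. \<forall>i\<ge>n. x i = 0}"

definition W :: "nat \<Rightarrow> (nat \<Rightarrow> real) set" where
  "W n = {x \<in> Rn n. \<forall>i j. i < j \<and> j < n \<longrightarrow> x j \<le> x i}"

definition W0 :: "nat \<Rightarrow> (nat \<Rightarrow> real) set" where
  "W0 n = {x \<in> Rn n. \<forall>i j. i < j \<and> j < n \<longrightarrow> x j < x i}"

definition lam_hyp :: "nat \<Rightarrow> nat \<Rightarrow> nat \<Rightarrow> (nat \<Rightarrow> real) set" where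
  "lam_hyp n i j = {x \<in> Rn n. if i = j then x i = 0 else x i + x j = 0}"

definition arr_union :: "nat \<Rightarrow> (nat \<Rightarrow> real) set" where
  "arr_union n = (\<Union>i\<in>{..<n}. \<Union>j\<in>{i..<n}. lam_hyp n i j)"

definition chambers :: "nat \<Rightarrow> (nat \<Rightarrow> real) set set" where
  "chambers n = {closure (connected_component_set (W0 n - arr_union n) x) | x.
                    x \<in> W0 n - arr_union n}"

definition lin_form :: "nat \<Rightarrow> (nat \<Rightarrow> real) \<Rightarrow> (nat \<Rightarrow> real) \<Rightarrow> real" where
  "lin_form n a x = (\<Sum>i<n. a i * x i)"

definition supporting :: "nat \<Rightarrow> (nat \<Rightarrow> real) \<Rightarrow> real \<Rightarrow> (nat \<Rightarrow> real) set \<Rightarrow> bool" where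
  "supporting n a b C \<longleftrightarrow> a \<in> Rn n \<and> (\<exists>i<n. a i \<noteq> 0) \<and> C \<subseteq> {x. lin_form n a x \<le> b}
      \<and> C \<inter> {x \<in> Rn n. lin_form n a x = b} \<noteq> {}"

definition faces :: "nat \<Rightarrow> (nat \<Rightarrow> real) set set" where
  "faces n = {F. \<exists>C\<in>chambers n. F = C \<or>
      (\<exists>a b. supporting n a b C \<and> F = C \<inter> {x \<in> Rn n. lin_form n a x = b})}"

definition lin_indep :: "(nat \<Rightarrow> real) set \<Rightarrow> bool" where
  "lin_indep B \<longleftrightarrow> (\<forall>c. (\<forall>i. (\<Sum>v\<in>B. c v * v i) = 0) \<longrightarrow> (\<forall>v\<in>B. c v = 0))"

definition span_dim :: "(nat \<Rightarrow> real) set \<Rightarrow> nat" where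
  "span_dim S = Max {card B | B. finite B \<and> B \<subseteq> S \<and> lin_indep B}"

definition num_kfaces :: "nat \<Rightarrow> nat \<Rightarrow> nat" where
  "num_kfaces n k = card {F \<in> faces n. span_dim F = k}"

definition g :: "int \<Rightarrow> int \<Rightarrow> int" where
  "g n k = (if n < 0 \<or> k < 0 \<or> k > n then 0 else int (num_kfaces (nat n) (nat k)))"

end

theory Submission
  imports Defs "HOL-Library.Function_Algebras"
begin

text \<open>
  For p + q \<le> n let \<rho>(p,q) be the vector whose first p coordinates are 1, whose last q
  coordinates are -1, and whose other coordinates vanish. A point of W0 off the hyperplanes
  has nonzero coordinates with pairwise distinct absolute values. Listing them by decreasing
  absolute value walks a lattice path from (0,0) to the line p + q = n: each step takes the next
  positive coordinate from the front or the next negative one from the back. The chamber of such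
  a point is the simplicial cone spanned by the rays \<rho>(e) for the points e of this path, and its
  faces are the cones over subsets of the path, i.e. over chains in the product order on
  {(p,q). 1 \<le> p + q \<le> n}. A cone determines its chain, and the rays of a chain are linearly
  independent, so k-faces correspond to k-element chains. Classifying a chain by its least element
  (p, l - p), where 1 \<le> l \<le> n and 0 \<le> p \<le> l, and shifting the remaining elements by that
  point gives the recursion.
\<close>

section \<open>Rays and lattice paths\<close>

definition ray :: "nat \<Rightarrow> nat \<times> nat \<Rightarrow> nat \<Rightarrow> real" where
  "ray n e i = (if i < fst e then 1 else if n - snd e \<le> i \<and> i < n then -1 else 0)"

definition ray_index :: "nat \<Rightarrow> (nat \<times> nat) set" where
  "ray_index n = {e. 1 \<le> fst e + snd e \<and> fst e + snd e \<le> n}"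

definition ray_comb :: "nat \<Rightarrow> (nat \<times> nat) set \<Rightarrow>
                        (nat \<times> nat \<Rightarrow> real) \<Rightarrow> nat \<Rightarrow> real" where
  "ray_comb n E c = (\<lambda>i. \<Sum>e\<in>E. c e * ray n e i)"

definition ray_cone :: "nat \<Rightarrow> (nat \<times> nat) set \<Rightarrow>
                        (nat \<Rightarrow> real) set" where
  "ray_cone n E = {ray_comb n E c | c. \<forall>e\<in>E. 0 \<le> c e}"

fun path_pt :: "(nat \<Rightarrow> bool) \<Rightarrow> nat \<Rightarrow> nat \<times> nat" where
  "path_pt s 0 = (0,0)"
| "path_pt s (Suc m) =
    (if s m then (Suc (fst (path_pt s m)), snd (path_pt s m))
     else (fst (path_pt s m), Suc (snd (path_pt s m))))"

definition path_chain :: "nat \<Rightarrow> (nat \<Rightarrow> bool) \<Rightarrow> (nat \<times> nat) set" where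
  "path_chain n s = path_pt s ` {1..n}"

text \<open>Step j of the path is matched with the coordinate path_coord n s j: the next free one from
  the front for a first-component step, from the back otherwise. The guard j < n makes
  path_val n s n vanish, which closes the chain of inequalities defining the open chamber.\<close>
definition path_coord :: "nat \<Rightarrow> (nat \<Rightarrow> bool) \<Rightarrow> nat \<Rightarrow> nat" where
  "path_coord n s j = (if s j then fst (path_pt s j) else n - 1 - snd (path_pt s j))"

definition path_sign :: "(nat \<Rightarrow> bool) \<Rightarrow> nat \<Rightarrow> real" where
  "path_sign s j = (if s j then 1 else -1)"

definition path_val :: "nat \<Rightarrow> (nat \<Rightarrow> bool) \<Rightarrow> nat \<Rightarrow>
                        (nat \<Rightarrow> real) \<Rightarrow> real" where
  "path_val n s j y = (if j < n then path_sign s j * y (path_coord n s j) else 0)"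

lemma path_pt_sum: "fst (path_pt s m) + snd (path_pt s m) = m"
  by (induction m) auto

lemma path_pt_mono:
  "m \<le> m' \<Longrightarrow> fst (path_pt s m) \<le> fst (path_pt s m') \<and>
   snd (path_pt s m) \<le> snd (path_pt s m')"
proof (induction m' )
  case 0 then show ?case by simp
next
  case (Suc m')
  then show ?case by (cases "m = Suc m'") (auto simp: le_Suc_eq)
qed

lemma path_pt_inj: "path_pt s m = path_pt s m' \<Longrightarrow> m = m'"
  by (metis path_pt_sum)

lemma path_sign_sq [simp]: "path_sign s j * path_sign s j = 1"
  by (simp add: path_sign_def)

lemma ray_fst_step:
  "Suc p + q \<le> n \<Longrightarrow> ray n (Suc p, q) i = ray n (p,q) i +
   (if i = p then 1 else 0)"
  by (auto simp: ray_def)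

lemma ray_snd_step:
  "p + Suc q \<le> n \<Longrightarrow> ray n (p, Suc q) i = ray n (p,q) i +
   (if i = n - Suc q then -1 else 0)"
  by (auto simp: ray_def)

lemma ray_path_pt:
  "m \<le> n \<Longrightarrow> ray n (path_pt s m) i =
   (\<Sum>j<m. if path_coord n s j = i then path_sign s j else 0)"
proof (induction m)
  case 0 then show ?case by (simp add: ray_def)
next
  case (Suc m)
  have h: "fst (path_pt s m) + snd (path_pt s m) = m" by (rule path_pt_sum)
  show ?case
  proof (cases "s m")
    case True
    have "ray n (path_pt s (Suc m)) i = ray n (Suc (fst (path_pt s m)), snd (path_pt s m)) i"
      using True by simp
    also have "\<dots> = ray n (path_pt s m) i + (if i = fst (path_pt s m) then 1 else 0)"
      using ray_fst_step[of "fst (path_pt s m)" "snd (path_pt s m)" n i] Suc.prems h by simp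
    finally show ?thesis using Suc True by (simp add: path_coord_def path_sign_def eq_commute)
  next
    case False
    have "ray n (path_pt s (Suc m)) i = ray n (fst (path_pt s m), Suc (snd (path_pt s m))) i"
      using False by simp
    also have "\<dots> = ray n (path_pt s m) i +
               (if i = n - Suc (snd (path_pt s m)) then -1 else 0)"
      using ray_snd_step[of "fst (path_pt s m)" "snd (path_pt s m)" n i] Suc.prems h by simp
    finally show ?thesis using Suc False by (simp add: path_coord_def path_sign_def eq_commute)
  qed
qed

lemma path_coord_lt: "j < n \<Longrightarrow> path_coord n s j < n"
proof -
  assume "j < n"
  moreover have "fst (path_pt s j) + snd (path_pt s j) = j" by (rule path_pt_sum)
  ultimately show ?thesis by (auto simp: path_coord_def)
qed

lemma path_pt_Suc_fst:
  "s j \<Longrightarrow> Suc j \<le> j' \<Longrightarrow> Suc (fst (path_pt s j)) \<le>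
   fst (path_pt s j')"
  using path_pt_mono[of "Suc j" j' s] by simp

lemma path_pt_Suc_snd:
  "\<not> s j \<Longrightarrow> Suc j \<le> j' \<Longrightarrow> Suc (snd (path_pt s j)) \<le>
   snd (path_pt s j')"
  using path_pt_mono[of "Suc j" j' s] by simp

lemma path_coord_neq:
  "j < j' \<Longrightarrow> j' < n \<Longrightarrow> path_coord n s j \<noteq> path_coord n s j'"
proof -
  assume a: "j < j'" "j' < n"
  have s1: "fst (path_pt s j') + snd (path_pt s j') = j'" by (rule path_pt_sum)
  show ?thesis
  proof (cases "s j")
    case True
    then have "Suc (fst (path_pt s j)) \<le> fst (path_pt s j')" using path_pt_Suc_fst a by simp
    then show ?thesis using True a s1 by (auto simp: path_coord_def)
  next
    case False
    then have "Suc (snd (path_pt s j)) \<le> snd (path_pt s j')" using path_pt_Suc_snd a by simp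
    then show ?thesis using False a s1 by (auto simp: path_coord_def)
  qed
qed

lemma path_coord_inj:
  "j < n \<Longrightarrow> j' < n \<Longrightarrow> path_coord n s j = path_coord n s j' \<Longrightarrow> j = j'"
  by (metis path_coord_neq linorder_neqE_nat)

lemma path_coord_image: "path_coord n s ` {..<n} = {..<n}"
proof -
  have inj: "inj_on (path_coord n s) {..<n}" using path_coord_inj by (auto simp: inj_on_def)
  have sub: "path_coord n s ` {..<n} \<subseteq> {..<n}" using path_coord_lt by auto
  have "card (path_coord n s ` {..<n}) = card {..<n}" using card_image[OF inj] by simp
  then show ?thesis using card_subset_eq[OF _ sub] by simp
qed

lemma path_coord_surj: "i < n \<Longrightarrow> \<exists>j<n. path_coord n s j = i"
  using path_coord_image[of n s] by (metis imageE lessThan_iff)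

lemma ray_path_pt_path_coord:
  "j < n \<Longrightarrow> m \<le> n \<Longrightarrow> ray n (path_pt s m) (path_coord n s j) =
   (if j < m then path_sign s j else 0)"
proof -
  assume a: "j < n" "m \<le> n"
  have "ray n (path_pt s m) (path_coord n s j) = (\<Sum>j'<m. if j' = j then path_sign s j' else 0)"
    unfolding ray_path_pt[OF a(2)]
  proof (rule sum.cong)
    fix x assume "x \<in> {..<m}"
    then have "path_coord n s x = path_coord n s j \<longleftrightarrow> x = j"
      using path_coord_inj[of x n j s] a by auto
    then show "(if path_coord n s x = path_coord n s j then path_sign s x else 0) =
        (if x = j then path_sign s x else 0)" by simp
  qed simp
  then show ?thesis by simp
qed

lemma path_val_ray:
  "m \<le> n \<Longrightarrow> path_val n s j (ray n (path_pt s m)) = (if j < m then 1 else 0)"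
  by (cases "j < n") (auto simp: path_val_def ray_path_pt_path_coord)

lemma path_val_ge: "n \<le> j \<Longrightarrow> path_val n s j y = 0"
  by (simp add: path_val_def)

lemma path_val_zero: "path_val n s j (\<lambda>i. 0) = 0"
  by (simp add: path_val_def)

lemma path_val_ray_comb:
  "path_val n s j (ray_comb n E c) = (\<Sum>e\<in>E. c e * path_val n s j (ray n e))"
  by (simp add: path_val_def ray_comb_def sum_distrib_left algebra_simps)

lemma ray_outside: "fst e \<le> n \<Longrightarrow> n \<le> i \<Longrightarrow> ray n e i = 0"
  by (simp add: ray_def)

lemma ray_comb_Rn: "E \<subseteq> ray_index n \<Longrightarrow> ray_comb n E c \<in> Rn n"
  unfolding Rn_def ray_comb_def
proof (intro CollectI allI impI sum.neutral ballI)
  fix i e assume "E \<subseteq> ray_index n" "n \<le> i" "e \<in> E"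
  then have "fst e \<le> n" by (auto simp: ray_index_def)
  then show "c e * ray n e i = 0" using \<open>n \<le> i\<close> by (simp add: ray_outside)
qed

lemma path_chain_ray_index: "path_chain n s \<subseteq> ray_index n"
  by (auto simp: path_chain_def ray_index_def path_pt_sum)

lemma finite_ray_index: "finite (ray_index n)"
proof -
  have "ray_index n \<subseteq> {..n} \<times> {..n}" by (auto simp: ray_index_def)
  then show ?thesis by (rule finite_subset) auto
qed

lemma inj_path_pt: "inj_on (path_pt s) A"
  by (auto simp: inj_on_def intro: path_pt_inj)

lemma card_path_chain: "card (path_chain n s) = n"
  by (simp add: path_chain_def card_image[OF inj_path_pt])

lemma finite_path_chain: "finite (path_chain n s)"
  by (simp add: path_chain_def)

lemma ray_comb_path_pt:
  "ray_comb n (path_pt s ` J) c =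
   (\<lambda>i. \<Sum>m\<in>J. c (path_pt s m) * ray n (path_pt s m) i)"
  by (simp add: ray_comb_def sum.reindex[OF inj_path_pt])

lemma subset_path_chain_eq_image:
  "E \<subseteq> path_chain n s \<Longrightarrow> E = path_pt s ` {m\<in>{1..n}. path_pt s m \<in> E}"
  unfolding path_chain_def by blast

lemma path_pt_add:
  "path_pt s (a + m) =
    (fst (path_pt s a) + fst (path_pt (\<lambda>j. s (j + a)) m),
     snd (path_pt s a) + snd (path_pt (\<lambda>j. s (j + a)) m))"
  by (induction m) (auto simp: add.commute)

section \<open>The open chamber of a lattice path\<close>

definition open_chamber :: "nat \<Rightarrow> (nat \<Rightarrow> bool) \<Rightarrow>
                            (nat \<Rightarrow> real) set" where
  "open_chamber n s = {y \<in> Rn n. \<forall>j<n. path_val n s (Suc j) y < path_val n s j y}"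

definition tail_weight :: "(nat \<times> nat \<Rightarrow> real) \<Rightarrow>
                           (nat \<Rightarrow> bool) \<Rightarrow> nat set \<Rightarrow> nat \<Rightarrow> real" where
  "tail_weight c s J j = (\<Sum>m\<in>{m\<in>J. j < m}. c (path_pt s m))"

lemma path_val_comb_path_pt:
  assumes "J \<subseteq> {1..n}" "j \<le> n"
  shows "path_val n s j (ray_comb n (path_pt s ` J) c) = tail_weight c s J j"
proof (cases "j < n")
  case True
  have "path_val n s j (ray_comb n (path_pt s ` J) c) =
        (\<Sum>m\<in>J. c (path_pt s m) * path_val n s j (ray n (path_pt s m)))"
    by (simp add: path_val_ray_comb sum.reindex[OF inj_path_pt])
  also have "\<dots> = (\<Sum>m\<in>J. if j < m then c (path_pt s m) else 0)"
    by (rule sum.cong) (use assms True in \<open>auto simp: path_val_ray\<close>)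
  also have "\<dots> = tail_weight c s J j"
    unfolding tail_weight_def using assms finite_subset[OF assms(1)] by (simp add: sum.inter_filter)
  finally show ?thesis .
next
  case False
  then have "j = n" using assms by simp
  moreover have emp: "{m\<in>J. n < m} = {}" using assms by auto
  ultimately show ?thesis unfolding tail_weight_def
    by (simp only: emp path_val_ge order.refl sum.empty)
qed

lemma tail_weight_step:
  assumes "J \<subseteq> {1..n}" "j < n"
  shows "tail_weight c s J j = tail_weight c s J (Suc j) +
         (if Suc j \<in> J then c (path_pt s (Suc j)) else 0)"
proof -
  have fin: "finite J" using assms finite_subset by blast
  have "{m\<in>J. j < m} = {m\<in>J. Suc j < m} \<union> (if Suc j \<in> J then {Suc j} else {})"
    by (auto, metis Suc_lessI)
  then show ?thesis unfolding tail_weight_def using fin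
    by (auto simp: sum.union_disjoint)
qed

lemma sum_telescope_tail:
  fixes f :: "nat \<Rightarrow> real"
  assumes "j \<le> n"
  shows "(\<Sum>m\<in>{m\<in>{1..n}. j < m}. f (m - 1) - f m) = f j - f n"
  using assms
proof (induction n)
  case 0 then show ?case by simp
next
  case (Suc n)
  show ?case
  proof (cases "j = Suc n")
    case True
    then have e: "{m\<in>{1..Suc n}. j < m} = {}" by auto
    show ?thesis unfolding e using True by simp
  next
    case False
    then have jn: "j \<le> n" using Suc.prems by simp
    have "{m\<in>{1..Suc n}. j < m} = insert (Suc n) {m\<in>{1..n}. j < m}" using jn by auto
    then show ?thesis using Suc.IH[OF jn] by simp
  qed
qed

lemma path_chain_decomp:
  assumes "y \<in> Rn n"
  shows "y = ray_comb n (path_chain n s)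
         (\<lambda>e. path_val n s (fst e + snd e - 1) y - path_val n s (fst e + snd e) y)"
proof
  fix i
  let ?c = "\<lambda>e. path_val n s (fst e + snd e - 1) y - path_val n s (fst e + snd e) y"
  have eq: "ray_comb n (path_chain n s) ?c i =
            (\<Sum>m\<in>{1..n}. (path_val n s (m - 1) y - path_val n s m y) * ray n (path_pt s m) i)"
    by (simp add: path_chain_def ray_comb_path_pt path_pt_sum)
  show "y i = ray_comb n (path_chain n s) ?c i"
  proof (cases "i < n")
    case False
    then have "y i = 0" using assms by (simp add: Rn_def)
    moreover have "ray n (path_pt s m) i = 0" if "m \<in> {1..n}" for m
      using that False path_pt_sum[of s m] by (intro ray_outside; auto)
    ultimately show ?thesis using eq by simp
  next
    case True
    obtain j where j: "j < n" "path_coord n s j = i" using path_coord_surj[OF True] by blast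
    have "ray_comb n (path_chain n s) ?c i =
          (\<Sum>m\<in>{1..n}. (path_val n s (m - 1) y - path_val n s m y) * (if j < m then path_sign s j else 0))"
      unfolding eq using j by (intro sum.cong) (auto simp: ray_path_pt_path_coord[symmetric])
    also have "\<dots> = path_sign s j *
               (\<Sum>m\<in>{m\<in>{1..n}. j < m}. path_val n s (m - 1) y - path_val n s m y)"
      by (simp add: sum.inter_filter[symmetric] sum_distrib_left mult.commute if_distrib cong: if_cong)
    also have "\<dots> = path_sign s j * path_val n s j y"
      using sum_telescope_tail[of j n "\<lambda>m. path_val n s m y"] j by (simp add: path_val_ge)
    also have "\<dots> = y i" using j by (simp add: path_val_def mult.assoc[symmetric])
    finally show ?thesis by simp
  qed
qed

lemma path_coord_eq_path_val:
  "j < n \<Longrightarrow> y (path_coord n s j) = path_sign s j * path_val n s j y"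
  by (simp add: path_val_def mult.assoc[symmetric])

lemma path_val_step:
  assumes "y = ray_comb n (path_chain n s) c" "j < n"
  shows "path_val n s j y = path_val n s (Suc j) y + c (path_pt s (Suc j))"
proof -
  have J: "{1..n} \<subseteq> {1..n}" by simp
  have "path_val n s j y = tail_weight c s {1..n} j"
    using path_val_comb_path_pt[OF J, of j s c] assms by (simp add: path_chain_def)
  also have "\<dots> = tail_weight c s {1..n} (Suc j) + c (path_pt s (Suc j))"
    using tail_weight_step[OF J assms(2)] assms by simp
  also have "tail_weight c s {1..n} (Suc j) = path_val n s (Suc j) y"
    using path_val_comb_path_pt[OF J, of "Suc j" s c] assms by (simp add: path_chain_def)
  finally show ?thesis .
qed

lemma path_chainE:
  assumes "e \<in> path_chain n s"
  obtains m where "m \<in> {1..n}" "e = path_pt s m"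
  using assms by (auto simp: path_chain_def)

lemma ray_cone_path_chain:
  "ray_cone n (path_chain n s) =
   {y \<in> Rn n. \<forall>j<n. path_val n s (Suc j) y \<le> path_val n s j y}"
proof (intro set_eqI iffI)
  fix y assume "y \<in> ray_cone n (path_chain n s)"
  then obtain c where c: "y = ray_comb n (path_chain n s) c" "\<forall>e\<in>path_chain n s. 0 \<le> c e"
    by (auto simp: ray_cone_def)
  have "y \<in> Rn n" using c ray_comb_Rn[OF path_chain_ray_index] by simp
  moreover have "path_val n s (Suc j) y \<le> path_val n s j y" if "j < n" for j
  proof -
    have "Suc j \<in> {1..n}" using that by simp
    then have "path_pt s (Suc j) \<in> path_chain n s" unfolding path_chain_def by (rule imageI)
    then show ?thesis using path_val_step[OF c(1) that] c(2) by simp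
  qed
  ultimately show "y \<in> {y \<in> Rn n. \<forall>j<n. path_val n s (Suc j) y \<le> path_val n s j y}"
    by simp
next
  fix y assume y: "y \<in> {y \<in> Rn n. \<forall>j<n. path_val n s (Suc j) y \<le> path_val n s j y}"
  let ?c = "\<lambda>e. path_val n s (fst e + snd e - 1) y - path_val n s (fst e + snd e) y"
  have "y = ray_comb n (path_chain n s) ?c" using path_chain_decomp y by simp
  moreover have "0 \<le> ?c e" if e: "e \<in> path_chain n s" for e
  proof -
    obtain m where m: "m \<in> {1..n}" "e = path_pt s m" using path_chainE[OF e] by blast
    then have "fst e + snd e = m" by (simp add: path_pt_sum)
    moreover have "m - 1 < n" using m by auto
    then have "path_val n s (Suc (m - 1)) y \<le> path_val n s (m - 1) y" using y by blast
    ultimately show ?thesis using m by simp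
  qed
  ultimately show "y \<in> ray_cone n (path_chain n s)" unfolding ray_cone_def by blast
qed

lemma open_chamber_eq_comb:
  "open_chamber n s = {ray_comb n (path_chain n s) c | c. \<forall>e\<in>path_chain n s. 0 < c e}"
proof (intro set_eqI iffI)
  fix y assume y: "y \<in> open_chamber n s"
  let ?c = "\<lambda>e. path_val n s (fst e + snd e - 1) y - path_val n s (fst e + snd e) y"
  have "y = ray_comb n (path_chain n s) ?c" using path_chain_decomp y
    by (simp add: open_chamber_def)
  moreover have "0 < ?c e" if e: "e \<in> path_chain n s" for e
  proof -
    obtain m where m: "m \<in> {1..n}" "e = path_pt s m" using path_chainE[OF e] by blast
    then have "fst e + snd e = m" by (simp add: path_pt_sum)
    moreover have "m - 1 < n" using m by auto
    then have "path_val n s (Suc (m - 1)) y < path_val n s (m - 1) y" using y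
      by (auto simp: open_chamber_def)
    ultimately show ?thesis using m by simp
  qed
  ultimately show "y \<in> {ray_comb n (path_chain n s) c | c. \<forall>e\<in>path_chain n s. 0 < c e}"
    by blast
next
  fix y assume "y \<in> {ray_comb n (path_chain n s) c | c. \<forall>e\<in>path_chain n s. 0 < c e}"
  then obtain c where c: "y = ray_comb n (path_chain n s) c" "\<forall>e\<in>path_chain n s. 0 < c e"
    by auto
  have "y \<in> Rn n" using c ray_comb_Rn[OF path_chain_ray_index] by simp
  moreover have "path_val n s (Suc j) y < path_val n s j y" if "j < n" for j
  proof -
    have "Suc j \<in> {1..n}" using that by simp
    then have "path_pt s (Suc j) \<in> path_chain n s" unfolding path_chain_def by (rule imageI)
    then show ?thesis using path_val_step[OF c(1) that] c(2) by simp
  qed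
  ultimately show "y \<in> open_chamber n s" by (simp add: open_chamber_def)
qed

lemma open_chamber_strict:
  assumes y: "y \<in> open_chamber n s" and "j < j'" "j' \<le> n"
  shows "path_val n s j' y < path_val n s j y"
  using assms(2,3)
proof (induction j' rule: less_induct)
  case (less j')
  then obtain k where k: "j' = Suc k" by (cases j') auto
  have st: "path_val n s (Suc k) y < path_val n s k y" using y less.prems k
    by (auto simp: open_chamber_def)
  show ?case
  proof (cases "j = k")
    case True then show ?thesis using st k by simp
  next
    case False
    then have "path_val n s k y < path_val n s j y" using less.IH[of k] less.prems k by simp
    then show ?thesis using st k by simp
  qed
qed

lemma open_chamber_pos:
  "y \<in> open_chamber n s \<Longrightarrow> j < n \<Longrightarrow> 0 < path_val n s j y"
  using open_chamber_strict[of y n s j n] by (simp add: path_val_ge)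

lemma abs_path_coord:
  "y \<in> open_chamber n s \<Longrightarrow> j < n \<Longrightarrow>
   \<bar>y (path_coord n s j)\<bar> = path_val n s j y"
  using open_chamber_pos[of y n s j] by (simp add: path_coord_eq_path_val abs_mult path_sign_def)

lemma open_chamber_path_val_inj:
  assumes "y \<in> open_chamber n s" "j < n" "j' < n" "path_val n s j y = path_val n s j' y"
  shows "j = j'"
proof (rule ccontr)
  assume "j \<noteq> j'"
  then consider "j < j'" | "j' < j" by linarith
  then show False
    using open_chamber_strict[OF assms(1), of j j'] open_chamber_strict[OF assms(1), of j' j] assms
    by (cases; simp)
qed

definition generic :: "nat \<Rightarrow> (nat \<Rightarrow> real) set" where
  "generic n = W0 n - arr_union n"

definition abs_injective :: "nat \<Rightarrow> (nat \<Rightarrow> real) \<Rightarrow> bool" where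
  "abs_injective n x \<longleftrightarrow>
   (\<forall>i<n. \<forall>j<n. x i \<noteq> 0 \<longrightarrow> \<bar>x i\<bar> = \<bar>x j\<bar> \<longrightarrow> i = j)"

lemma W0_W: "x \<in> W0 n \<Longrightarrow> x \<in> W n"
  by (auto simp: W0_def W_def less_imp_le)

lemma in_arr_union:
  "i \<le> j \<Longrightarrow> j < n \<Longrightarrow> x \<in> lam_hyp n i j \<Longrightarrow>
   x \<in> arr_union n"
  unfolding arr_union_def
  by (rule UN_I[of i]) (auto intro: UN_I[of j])

lemma generic_iff:
  "y \<in> generic n \<longleftrightarrow> y \<in> W0 n \<and> (\<forall>i<n. y i \<noteq> 0) \<and>
   abs_injective n y"
proof
  assume y: "y \<in> generic n"
  have yW0: "y \<in> W0 n" and na: "y \<notin> arr_union n" using y by (auto simp: generic_def)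
  have nz: "y i \<noteq> 0" if i: "i < n" for i
  proof
    assume "y i = 0"
    then have "y \<in> lam_hyp n i i" using yW0 by (simp add: lam_hyp_def W0_def)
    then show False using na in_arr_union[of i i n] i by blast
  qed
  have "abs_injective n y"
    unfolding abs_injective_def
  proof (intro allI impI)
    fix i j assume a: "i < n" "j < n" "y i \<noteq> 0" "\<bar>y i\<bar> = \<bar>y j\<bar>"
    show "i = j"
    proof (rule ccontr)
      assume "i \<noteq> j"
      then have ab: "min i j < max i j" "max i j < n" using a by auto
      then have "y (max i j) < y (min i j)" using yW0 by (auto simp: W0_def)
      then have "y (min i j) + y (max i j) = 0" using a(4)
        by (auto simp: min_def max_def abs_if split: if_splits)
      then have "y \<in> lam_hyp n (min i j) (max i j)" using yW0 ab
        by (auto simp: lam_hyp_def W0_def)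
      then show False using na in_arr_union[of "min i j" "max i j" n] ab by auto
    qed
  qed
  then show "y \<in> W0 n \<and> (\<forall>i<n. y i \<noteq> 0) \<and> abs_injective n y"
    using yW0 nz by blast
next
  assume y: "y \<in> W0 n \<and> (\<forall>i<n. y i \<noteq> 0) \<and> abs_injective n y"
  have "y \<notin> arr_union n"
  proof
    assume "y \<in> arr_union n"
    then obtain i j where ij: "i < n" "i \<le> j" "j < n" "y \<in> lam_hyp n i j"
      by (auto simp: arr_union_def)
    show False
    proof (cases "i = j")
      case True then show False using ij y by (simp add: lam_hyp_def)
    next
      case False
      then have "\<bar>y i\<bar> = \<bar>y j\<bar>" using ij by (auto simp: lam_hyp_def)
      then show False using y ij False unfolding abs_injective_def by blast
    qed
  qed
  then show "y \<in> generic n" using y by (simp add: generic_def)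
qed

lemma path_coord_pos_lt:
  assumes "j' < n" "s j" "s j'" "path_coord n s j < path_coord n s j'"
  shows "j < j'"
proof (rule ccontr)
  assume "\<not> j < j'"
  then have "fst (path_pt s j') \<le> fst (path_pt s j)" using path_pt_mono[of j' j s] by simp
  then show False using assms by (simp add: path_coord_def)
qed

lemma path_coord_neg_lt:
  assumes "j < n" "\<not> s j" "\<not> s j'" "path_coord n s j < path_coord n s j'"
  shows "j' < j"
proof (rule ccontr)
  assume "\<not> j' < j"
  then have "snd (path_pt s j) \<le> snd (path_pt s j')" using path_pt_mono[of j j' s] by simp
  then show False using assms by (simp add: path_coord_def)
qed

lemma path_coord_pos_lt_neg:
  assumes "j < n" "j' < n" "\<not> s j" "s j'"
  shows "path_coord n s j' < path_coord n s j"
proof -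
  have "Suc (snd (path_pt s j)) \<le> snd (path_pt s n)" using path_pt_Suc_snd[of s j n] assms
    by simp
  moreover have "Suc (fst (path_pt s j')) \<le> fst (path_pt s n)"
    using path_pt_Suc_fst[of s j' n] assms by simp
  moreover have "fst (path_pt s n) + snd (path_pt s n) = n" by (rule path_pt_sum)
  ultimately show ?thesis using assms by (simp add: path_coord_def)
qed

lemma open_chamber_dec:
  assumes y: "y \<in> open_chamber n s" and ik: "i < k" "k < n"
  shows "y k < y i"
proof -
  obtain j where j: "j < n" "path_coord n s j = i" using path_coord_surj[of i n s] ik by auto
  obtain j' where j': "j' < n" "path_coord n s j' = k" using path_coord_surj[of k n s] ik by auto
  have yi: "y i = path_sign s j * path_val n s j y" using path_coord_eq_path_val j by metis
  have yk: "y k = path_sign s j' * path_val n s j' y" using path_coord_eq_path_val j' by metis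
  have pos: "0 < path_val n s j y" "0 < path_val n s j' y" using open_chamber_pos y j j' by auto
  consider "s j" "s j'" | "s j" "\<not> s j'" | "\<not> s j" "s j'" | "\<not> s j" "\<not> s j'"
    by blast
  then show ?thesis
  proof cases
    case 1
    then have "path_val n s j' y < path_val n s j y"
      using open_chamber_strict[OF y] path_coord_pos_lt[of j' n s j] j j' ik by simp
    then show ?thesis using yi yk 1 by (simp add: path_sign_def)
  next
    case 2
    then show ?thesis using yi yk pos by (simp add: path_sign_def)
  next
    case 3
    then show ?thesis using path_coord_pos_lt_neg[of j n j' s] j j' ik by simp
  next
    case 4
    then have "path_val n s j y < path_val n s j' y"
      using open_chamber_strict[OF y] path_coord_neg_lt[of j n s j'] j j' ik by simp
    then show ?thesis using yi yk 4 by (simp add: path_sign_def)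
  qed
qed

lemma open_chamber_generic: "y \<in> open_chamber n s \<Longrightarrow> y \<in> generic n"
proof -
  assume y: "y \<in> open_chamber n s"
  have "y \<in> W0 n" using open_chamber_dec[OF y] y by (auto simp: W0_def open_chamber_def)
  moreover have "y i \<noteq> 0" if i: "i < n" for i
  proof -
    obtain j where j: "j < n" "path_coord n s j = i" using path_coord_surj[of i n s] i by auto
    show ?thesis using abs_path_coord[OF y j(1)] open_chamber_pos[OF y j(1)] j by auto
  qed
  moreover have "abs_injective n y"
    unfolding abs_injective_def
  proof (intro allI impI)
    fix i k assume a: "i < n" "k < n" "y i \<noteq> 0" "\<bar>y i\<bar> = \<bar>y k\<bar>"
    obtain j where j: "j < n" "path_coord n s j = i" using path_coord_surj[of i n s] a by auto
    obtain j' where j': "j' < n" "path_coord n s j' = k" using path_coord_surj[of k n s] a by auto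
    have "path_val n s j y = path_val n s j' y"
      using abs_path_coord[OF y j(1)] abs_path_coord[OF y j'(1)] a j j' by simp
    then show "i = k" using open_chamber_path_val_inj[OF y j(1) j'(1)] j j' by simp
  qed
  ultimately show ?thesis by (simp add: generic_iff)
qed

section \<open>Chains of rays\<close>

definition pair_le :: "nat \<times> nat \<Rightarrow> nat \<times> nat \<Rightarrow> bool" where
  "pair_le e e' \<longleftrightarrow> fst e \<le> fst e' \<and> snd e \<le> snd e'"

definition ray_chain :: "nat \<Rightarrow> (nat \<times> nat) set \<Rightarrow> bool" where
  "ray_chain n E \<longleftrightarrow> E \<subseteq> ray_index n \<and>
   (\<forall>e\<in>E. \<forall>e'\<in>E. pair_le e e' \<or> pair_le e' e)"

lemma ray_chain_finite: "ray_chain n E \<Longrightarrow> finite E"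
  unfolding ray_chain_def using finite_ray_index finite_subset by blast

lemma ray_chain_subset:
  "ray_chain n E \<Longrightarrow> E' \<subseteq> E \<Longrightarrow> ray_chain n E'"
  unfolding ray_chain_def by blast

lemma ray_chain_top:
  assumes "ray_chain n E" "E \<noteq> {}"
  shows "\<exists>t\<in>E. \<forall>e\<in>E. pair_le e t"
proof -
  have fin: "finite E" using ray_chain_finite assms by blast
  let ?m = "Max ((\<lambda>e. fst e + snd e) ` E)"
  have "?m \<in> (\<lambda>e. fst e + snd e) ` E" using fin assms by (intro Max_in) auto
  then obtain t where t: "t \<in> E" "fst t + snd t = ?m" by auto
  have "pair_le e t" if e: "e \<in> E" for e
  proof -
    have "fst e + snd e \<le> ?m" using fin e by (intro Max_ge) auto
    moreover have "pair_le e t \<or> pair_le t e" using assms(1) e t(1)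
      by (auto simp: ray_chain_def)
    ultimately show ?thesis using t by (auto simp: pair_le_def)
  qed
  then show ?thesis using t by blast
qed

lemma ray_comb_remove:
  assumes "finite E" "t \<in> E"
  shows "ray_comb n E c i = c t * ray n t i + ray_comb n (E - {t}) c i"
  unfolding ray_comb_def using sum.remove[OF assms] by simp

lemma ray_comb_upd_out: "t \<notin> E \<Longrightarrow> ray_comb n E (c(t := d)) = ray_comb n E c"
  unfolding ray_comb_def by (intro ext sum.cong) auto

lemma ray_comb_restrict_nonzero:
  assumes "finite E"
  shows "ray_comb n E c = ray_comb n {e\<in>E. c e \<noteq> 0} c"
  unfolding ray_comb_def using assms by (intro ext sum.mono_neutral_right) auto

lemma ray_comb_shift:
  assumes "finite E" "t \<in> E"
  shows "ray_comb n E (c(t := c t - d)) i = ray_comb n E c i - d * ray n t i"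
  using ray_comb_remove[OF assms, of n "c(t := c t - d)" i] ray_comb_remove[OF assms, of n c i]
    ray_comb_upd_out[of t "E - {t}" n c "c t - d"] by (simp add: algebra_simps)

lemma ray_comb_sign:
  assumes ch: "ray_chain n E" and pos: "\<forall>e\<in>E. 0 < c e"
    and t: "t \<in> E" "\<forall>e\<in>E. pair_le e t" and i: "i < n"
  shows "(0 < ray_comb n E c i \<longleftrightarrow> i < fst t) \<and>
         (ray_comb n E c i < 0 \<longleftrightarrow> n - snd t \<le> i)"
proof -
  have fin: "finite E" using ray_chain_finite ch by blast
  have tT: "fst t + snd t \<le> n" using ch t(1) by (auto simp: ray_chain_def ray_index_def)
  have rem: "ray_comb n E c i = c t * ray n t i + ray_comb n (E - {t}) c i"
    using ray_comb_remove[OF fin t(1)] .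
  have eT: "fst e \<le> fst t \<and> snd e \<le> snd t" if "e \<in> E" for e using t(2) that
    by (auto simp: pair_le_def)
  consider (a) "i < fst t" | (b) "n - snd t \<le> i" | (c) "fst t \<le> i" "i < n - snd t"
    by linarith
  then show ?thesis
  proof cases
    case a
    have "0 \<le> c e * ray n e i" if "e \<in> E - {t}" for e
      using eT[of e] that pos tT a i by (auto simp: ray_def)
    then have "0 \<le> ray_comb n (E - {t}) c i" unfolding ray_comb_def by (intro sum_nonneg) auto
    moreover have "c t * ray n t i = c t" using a by (simp add: ray_def)
    moreover have "0 < c t" using pos t(1) by blast
    ultimately have "0 < ray_comb n E c i" using rem by linarith
    then show ?thesis using a tT by auto
  next
    case b
    have "c e * ray n e i \<le> 0" if "e \<in> E - {t}" for e
      using eT[of e] that pos tT b i by (auto simp: ray_def mult_le_0_iff)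
    then have "ray_comb n (E - {t}) c i \<le> 0" unfolding ray_comb_def by (intro sum_nonpos) auto
    moreover have "c t * ray n t i = - c t" using b i tT by (simp add: ray_def)
    moreover have "0 < c t" using pos t(1) by blast
    ultimately have "ray_comb n E c i < 0" using rem by linarith
    then show ?thesis using b tT by auto
  next
    case c
    have "ray n e i = 0" if "e \<in> E" for e
      using eT[of e] that tT c i by (auto simp: ray_def)
    then have "ray_comb n E c i = 0" unfolding ray_comb_def by simp
    then show ?thesis using c by auto
  qed
qed

lemma ray_comb_nonzero:
  assumes ch: "ray_chain n E" and pos: "\<forall>e\<in>E. 0 < c e" and ne: "E \<noteq> {}"
  shows "ray_comb n E c \<noteq> (\<lambda>i. 0)"
proof -
  obtain t where t: "t \<in> E" "\<forall>e\<in>E. pair_le e t" using ray_chain_top[OF ch ne]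
    by blast
  have tT: "1 \<le> fst t + snd t" "fst t + snd t \<le> n" using ch t(1)
    by (auto simp: ray_chain_def ray_index_def)
  show ?thesis
  proof (cases "0 < fst t")
    case True
    then have "0 < ray_comb n E c 0" using ray_comb_sign[OF ch pos t, of 0] tT by auto
    then show ?thesis by (metis less_irrefl)
  next
    case False
    then have "ray_comb n E c (n - 1) < 0" using ray_comb_sign[OF ch pos t, of "n - 1"] tT by auto
    then show ?thesis by (metis less_irrefl)
  qed
qed

lemma ray_chain_top_unique:
  assumes ch: "ray_chain n E" and pos: "\<forall>e\<in>E. 0 < c e"
    and t: "t \<in> E" "\<forall>e\<in>E. pair_le e t"
    and ch': "ray_chain n E'" and pos': "\<forall>e\<in>E'. 0 < c' e"
    and t': "t' \<in> E'" "\<forall>e\<in>E'. pair_le e t'"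
    and eq: "ray_comb n E c = ray_comb n E' c'"
  shows "t = t'"
proof -
  have tT: "fst t + snd t \<le> n" "1 \<le> fst t + snd t" using ch t(1)
    by (auto simp: ray_chain_def ray_index_def)
  have tT': "fst t' + snd t' \<le> n" "1 \<le> fst t' + snd t'" using ch' t'(1)
    by (auto simp: ray_chain_def ray_index_def)
  have S: "\<And>i. i < n \<Longrightarrow> (i < fst t \<longleftrightarrow> i < fst t') \<and>
           (n - snd t \<le> i \<longleftrightarrow> n - snd t' \<le> i)"
    using ray_comb_sign[OF ch pos t] ray_comb_sign[OF ch' pos' t'] eq by metis
  have "fst t = fst t'"
  proof (rule ccontr)
    assume "fst t \<noteq> fst t'"
    then consider "fst t < fst t'" | "fst t' < fst t" by linarith
    then show False
    proof cases
      case 1 then show False using S[of "fst t"] tT' by auto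
    next
      case 2 then show False using S[of "fst t'"] tT by auto
    qed
  qed
  moreover have "snd t = snd t'"
  proof (rule ccontr)
    assume "snd t \<noteq> snd t'"
    then consider "snd t < snd t'" | "snd t' < snd t" by linarith
    then show False
    proof cases
      case 1 then show False using S[of "n - snd t'"] tT' by auto
    next
      case 2 then show False using S[of "n - snd t"] tT by auto
    qed
  qed
  ultimately show ?thesis by (simp add: prod_eq_iff)
qed

text \<open>Both chains share their top ray; subtracting the smaller of its two coefficients from both
  sides drops it from at least one of them, and induction applies.\<close>
lemma ray_chain_comb_unique:
  assumes "ray_chain n E" "ray_chain n E'" "\<forall>e\<in>E. 0 < c e" "\<forall>e\<in>E'. 0 < c' e"
    and "ray_comb n E c = ray_comb n E' c'"
  shows "E = E'"
  using assms
proof (induction "card E + card E'" arbitrary: E E' c c' rule: less_induct)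
  case less
  note ch = less.prems(1) and ch' = less.prems(2) and pos = less.prems(3) and pos' = less.prems(4)
    and eq = less.prems(5)
  have fin: "finite E" "finite E'" using ray_chain_finite ch ch' by auto
  show ?case
  proof (cases "E = {} \<or> E' = {}")
    case True
    have "ray_comb n {} c0 = (\<lambda>i. 0)" for c0 by (simp add: ray_comb_def)
    then show ?thesis using True ray_comb_nonzero[OF ch pos] ray_comb_nonzero[OF ch' pos'] eq
      by metis
  next
    case False
    obtain t where t: "t \<in> E" "\<forall>e\<in>E. pair_le e t" using ray_chain_top[OF ch] False
      by blast
    obtain t' where t': "t' \<in> E'" "\<forall>e\<in>E'. pair_le e t'"
      using ray_chain_top[OF ch'] False by blast
    have tE': "t \<in> E'" using ray_chain_top_unique[OF ch pos t ch' pos' t' eq] t'(1) by simp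
    define d where "d = min (c t) (c' t)"
    define c1 where "c1 = c(t := c t - d)"
    define c1' where "c1' = c'(t := c' t - d)"
    define F where "F = {e\<in>E. c1 e \<noteq> 0}"
    define F' where "F' = {e\<in>E'. c1' e \<noteq> 0}"
    have "ray_comb n F c1 = ray_comb n F' c1'"
    proof
      fix i
      have "ray_comb n F c1 i = ray_comb n E c1 i"
        unfolding F_def by (simp only: ray_comb_restrict_nonzero[OF fin(1), symmetric])
      also have "\<dots> = ray_comb n E c i - d * ray n t i"
        unfolding c1_def by (rule ray_comb_shift[OF fin(1) t(1)])
      also have "\<dots> = ray_comb n E' c1' i"
        unfolding c1'_def ray_comb_shift[OF fin(2) tE'] eq ..
      also have "\<dots> = ray_comb n F' c1' i"
        unfolding F'_def by (simp only: ray_comb_restrict_nonzero[OF fin(2), symmetric])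
      finally show "ray_comb n F c1 i = ray_comb n F' c1' i" .
    qed
    moreover have "ray_chain n F" "ray_chain n F'"
      using ray_chain_subset ch ch' by (auto simp: F_def F'_def)
    moreover have "\<forall>e\<in>F. 0 < c1 e" "\<forall>e\<in>F'. 0 < c1' e"
      using pos pos' by (auto simp: F_def F'_def c1_def c1'_def d_def order_less_le)
    moreover have "card F + card F' < card E + card E'"
    proof -
      have "F \<subset> E \<or> F' \<subset> E'"
        using t(1) tE' by (auto simp: F_def F'_def c1_def c1'_def d_def min_def)
      moreover have "F \<subseteq> E" "F' \<subseteq> E'" by (auto simp: F_def F'_def)
      ultimately show ?thesis using fin psubset_card_mono card_mono
        by (metis add_less_le_mono add_le_less_mono)
    qed
    ultimately have "F = F'" using less.hyps by blast
    moreover have "E = insert t F" "E' = insert t F'"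
      using t(1) tE' pos pos' by (auto simp: F_def F'_def c1_def c1'_def)
    ultimately show ?thesis by simp
  qed
qed

lemma ray_chain_path_chain: "ray_chain n (path_chain n s)"
  unfolding ray_chain_def
proof (intro conjI ballI)
  show "path_chain n s \<subseteq> ray_index n" by (rule path_chain_ray_index)
  fix e e' assume "e \<in> path_chain n s" "e' \<in> path_chain n s"
  then obtain m m' where "e = path_pt s m" "e' = path_pt s m'" by (auto simp: path_chain_def)
  then show "pair_le e e' \<or> pair_le e' e"
  proof (cases "m \<le> m'")
    case True then show ?thesis
      using path_pt_mono[OF True, of s] \<open>e = path_pt s m\<close> \<open>e' = path_pt s m'\<close>
      by (simp add: pair_le_def)
  next
    case False then have "m' \<le> m" by simp
    then show ?thesis
      using path_pt_mono[of m' m s] \<open>e = path_pt s m\<close> \<open>e' = path_pt s m'\<close>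
      by (simp add: pair_le_def)
  qed
qed

lemma ray_chain_subset_path_chain: "E \<subseteq> path_chain n s \<Longrightarrow> ray_chain n E"
  using ray_chain_path_chain ray_chain_subset by blast

lemma ray_comb_insert:
  assumes "finite E" "t \<notin> E"
  shows "ray_comb n (insert t E) (c(t := d)) i = d * ray n t i + ray_comb n E c i"
proof -
  have "ray_comb n (insert t E) (c(t := d)) i = d * ray n t i + ray_comb n E (c(t := d)) i"
    using assms by (simp add: ray_comb_def)
  then show ?thesis using ray_comb_upd_out[OF assms(2)] by simp
qed

section \<open>Points of W as positive combinations of ray chains\<close>

definition num_pos :: "nat \<Rightarrow> (nat \<Rightarrow> real) \<Rightarrow> nat" where
  "num_pos n x = card {i. i < n \<and> 0 < x i}"

definition num_neg :: "nat \<Rightarrow> (nat \<Rightarrow> real) \<Rightarrow> nat" where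
  "num_neg n x = card {i. i < n \<and> x i < 0}"

definition num_nonzero :: "nat \<Rightarrow> (nat \<Rightarrow> real) \<Rightarrow> nat" where
  "num_nonzero n x = card {i. i < n \<and> x i \<noteq> 0}"

lemma down_closed_eq_lessThan:
  assumes "S \<subseteq> {..<n}" "\<And>i j. i \<le> j \<Longrightarrow> j \<in> S \<Longrightarrow> i \<in> S"
  shows "S = {..<card S}"
proof (cases "S = {}")
  case True then show ?thesis by simp
next
  case False
  have fin: "finite S" using assms(1) finite_subset by blast
  have "S = {..<Suc (Max S)}"
  proof
    show "S \<subseteq> {..<Suc (Max S)}" using fin by (auto simp: less_Suc_eq_le)
    show "{..<Suc (Max S)} \<subseteq> S"
    proof
      fix i assume "i \<in> {..<Suc (Max S)}"
      then have "i \<le> Max S" by simp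
      moreover have "Max S \<in> S" using fin False by simp
      ultimately show "i \<in> S" using assms(2) by blast
    qed
  qed
  then show ?thesis by (metis card_lessThan)
qed

lemma up_closed_eq_atLeastLessThan:
  assumes "S \<subseteq> {..<n}" "\<And>i j. i \<le> j \<Longrightarrow> j < n \<Longrightarrow> i \<in> S \<Longrightarrow> j \<in> S"
  shows "S = {n - card S..<n}"
proof (cases "S = {}")
  case True then show ?thesis by simp
next
  case False
  have fin: "finite S" using assms(1) finite_subset by blast
  have mS: "Min S \<in> S" using fin False by simp
  have "S = {Min S..<n}"
  proof
    show "S \<subseteq> {Min S..<n}" using fin assms(1) by auto
    show "{Min S..<n} \<subseteq> S"
    proof
      fix i assume "i \<in> {Min S..<n}"
      then show "i \<in> S" using assms(2)[of "Min S" i] mS by auto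
    qed
  qed
  moreover have "Min S < n" using mS assms(1) by auto
  ultimately have "card S = n - Min S" by (metis card_atLeastLessThan)
  then have "Min S = n - card S" using \<open>Min S < n\<close> by simp
  then show ?thesis using \<open>S = {Min S..<n}\<close> by simp
qed

lemma W_dec:
  "x \<in> W n \<Longrightarrow> i \<le> j \<Longrightarrow> j < n \<Longrightarrow> x j \<le> x i"
  by (cases "i = j") (auto simp: W_def)

lemma W_Rn: "x \<in> W n \<Longrightarrow> x \<in> Rn n"
  by (simp add: W_def)

lemma W_pos_coords: "x \<in> W n \<Longrightarrow> {i. i < n \<and> 0 < x i} = {..<num_pos n x}"
  unfolding num_pos_def
  by (rule down_closed_eq_lessThan[of _ n]) (auto dest: W_dec[of x n] intro: order.strict_trans2)

lemma W_neg_coords: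
  assumes xW: "x \<in> W n"
  shows "{i. i < n \<and> x i < 0} = {n - num_neg n x..<n}"
proof -
  let ?S = "{i. i < n \<and> x i < 0}"
  have sub: "?S \<subseteq> {..<n}" by auto
  have up: "j \<in> ?S" if a: "i \<le> j" "j < n" "i \<in> ?S" for i j
  proof -
    have "x j \<le> x i" using W_dec[OF xW a(1,2)] .
    moreover have "x i < 0" using a(3) by simp
    ultimately show ?thesis using a(2) by simp
  qed
  have eq: "?S = {n - card ?S..<n}" by (rule up_closed_eq_atLeastLessThan[OF sub up])
  show ?thesis unfolding num_neg_def by (rule eq)
qed

lemma W_pos_iff:
  "x \<in> W n \<Longrightarrow> i < n \<Longrightarrow> (0 < x i \<longleftrightarrow> i < num_pos n x)"
  using W_pos_coords[of x n] by (metis (mono_tags, lifting) lessThan_iff mem_Collect_eq)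

lemma W_neg_iff:
  assumes "x \<in> W n" "i < n"
  shows "x i < 0 \<longleftrightarrow> n - num_neg n x \<le> i"
proof -
  have e: "{i. i < n \<and> x i < 0} = {n - num_neg n x..<n}" by (rule W_neg_coords[OF assms(1)])
  have "(x i < 0) = (i \<in> {i. i < n \<and> x i < 0})" using assms(2) by simp
  also have "\<dots> = (i \<in> {n - num_neg n x..<n})" by (simp only: e)
  finally show ?thesis using assms(2) by simp
qed

lemma num_nonzero_split: "num_nonzero n x = num_pos n x + num_neg n x"
proof -
  have "{i. i < n \<and> x i \<noteq> 0} = {i. i < n \<and> 0 < x i} \<union> {i. i < n \<and> x i < 0}"
    by auto
  moreover have "{i. i < n \<and> 0 < x i} \<inter> {i. i < n \<and> x i < 0} = {}" by auto
  ultimately show ?thesis unfolding num_nonzero_def num_pos_def num_neg_def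
    by (simp add: card_Un_disjoint)
qed

lemma num_nonzero_le: "num_nonzero n x \<le> n"
proof -
  have "{i. i < n \<and> x i \<noteq> 0} \<subseteq> {..<n}" by auto
  then show ?thesis unfolding num_nonzero_def by (metis card_lessThan card_mono finite_lessThan)
qed

lemma ray_sign_pattern:
  assumes "x \<in> W n"
  shows "ray n (num_pos n x, num_neg n x) i = (if 0 < x i then 1 else if x i < 0 then -1 else 0)"
proof (cases "i < n")
  case True
  have "num_pos n x + num_neg n x \<le> n" using num_nonzero_split[of n x] num_nonzero_le[of n x]
    by simp
  then show ?thesis using W_pos_iff[OF assms True] W_neg_iff[OF assms True] True
    by (auto simp: ray_def)
next
  case False
  then have "x i = 0" using W_Rn[OF assms] by (simp add: Rn_def)
  moreover have "num_pos n x \<le> n" using num_nonzero_split[of n x] num_nonzero_le[of n x] by simp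
  ultimately show ?thesis using False by (auto simp: ray_def)
qed

definition min_abs :: "nat \<Rightarrow> (nat \<Rightarrow> real) \<Rightarrow> real" where
  "min_abs n x = Min ((\<lambda>i. \<bar>x i\<bar>) ` {i. i < n \<and> x i \<noteq> 0})"

definition peel :: "nat \<Rightarrow> (nat \<Rightarrow> real) \<Rightarrow> nat \<Rightarrow> real" where
  "peel n x = (\<lambda>i. x i - min_abs n x * ray n (num_pos n x, num_neg n x) i)"

lemma min_abs_le:
  "i < n \<Longrightarrow> x i \<noteq> 0 \<Longrightarrow> min_abs n x \<le> \<bar>x i\<bar>"
  unfolding min_abs_def by (intro Min_le) auto

lemma min_abs_attained:
  assumes "num_nonzero n x \<noteq> 0"
  obtains k where "k < n" "x k \<noteq> 0" "\<bar>x k\<bar> = min_abs n x"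
proof -
  have "{i. i < n \<and> x i \<noteq> 0} \<noteq> {}" using assms by (auto simp: num_nonzero_def)
  then have "min_abs n x \<in> (\<lambda>i. \<bar>x i\<bar>) ` {i. i < n \<and> x i \<noteq> 0}"
    unfolding min_abs_def by (intro Min_in) auto
  then show ?thesis using that by auto
qed

lemma peel_eq:
  "x \<in> W n \<Longrightarrow> peel n x i =
   (if 0 < x i then x i - min_abs n x else if x i < 0 then x i + min_abs n x else 0)"
  by (simp add: peel_def ray_sign_pattern)

lemma peel_W:
  assumes x: "x \<in> W n"
  shows "peel n x \<in> W n"
proof -
  have "peel n x \<in> Rn n" using W_Rn[OF x] by (simp add: Rn_def peel_eq[OF x])
  moreover have "peel n x j \<le> peel n x i" if ij: "i < j" "j < n" for i j
  proof -
    have "x j \<le> x i" using W_dec[OF x, of i j] ij by simp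
    moreover have "x i \<noteq> 0 \<Longrightarrow> min_abs n x \<le> \<bar>x i\<bar>"
      "x j \<noteq> 0 \<Longrightarrow> min_abs n x \<le> \<bar>x j\<bar>"
      using min_abs_le ij by auto
    ultimately show ?thesis unfolding peel_eq[OF x] by (auto simp: abs_if)
  qed
  ultimately show ?thesis by (simp add: W_def)
qed

lemma num_pos_peel:
  assumes x: "x \<in> W n"
  shows "num_pos n (peel n x) \<le> num_pos n x"
proof -
  have "{i. i < n \<and> 0 < peel n x i} \<subseteq> {i. i < n \<and> 0 < x i}"
    using min_abs_le[of _ n x] by (force simp: peel_eq[OF x] split: if_splits)
  then show ?thesis unfolding num_pos_def by (intro card_mono) auto
qed

lemma num_neg_peel:
  assumes x: "x \<in> W n"
  shows "num_neg n (peel n x) \<le> num_neg n x"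
proof -
  have "{i. i < n \<and> peel n x i < 0} \<subseteq> {i. i < n \<and> x i < 0}"
    using min_abs_le[of _ n x] by (force simp: peel_eq[OF x] split: if_splits)
  then show ?thesis unfolding num_neg_def by (intro card_mono) auto
qed

lemma abs_injective_peel:
  assumes x: "x \<in> W n" and inj: "abs_injective n x"
  shows "abs_injective n (peel n x)"
  unfolding abs_injective_def
proof (intro allI impI)
  fix i j assume a: "i < n" "j < n" "peel n x i \<noteq> 0"
      "\<bar>peel n x i\<bar> = \<bar>peel n x j\<bar>"
  let ?v = "min_abs n x"
  have xi: "x i \<noteq> 0" using a by (auto simp: peel_eq[OF x] split: if_splits)
  have vi: "?v \<le> \<bar>x i\<bar>" using min_abs_le[of i n x] a(1) xi by simp
  have ai: "\<bar>peel n x i\<bar> = \<bar>x i\<bar> - ?v" using xi vi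
    by (auto simp: peel_eq[OF x] abs_if)
  have xj: "x j \<noteq> 0" using a ai vi by (auto simp: peel_eq[OF x])
  have vj: "?v \<le> \<bar>x j\<bar>" using min_abs_le[of j n x] a(2) xj by simp
  have aj: "\<bar>peel n x j\<bar> = \<bar>x j\<bar> - ?v" using xj vj
    by (auto simp: peel_eq[OF x] abs_if)
  show "i = j" using inj a xi ai aj unfolding abs_injective_def by auto
qed

lemma num_nonzero_peel:
  assumes x: "x \<in> W n" and inj: "abs_injective n x" and nz: "num_nonzero n x \<noteq> 0"
  shows "num_nonzero n (peel n x) = num_nonzero n x - 1"
proof -
  obtain k where k: "k < n" "x k \<noteq> 0" "\<bar>x k\<bar> = min_abs n x"
    using min_abs_attained[OF nz] .
  have "{i. i < n \<and> peel n x i \<noteq> 0} = {i. i < n \<and> x i \<noteq> 0} - {k}"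
  proof (intro set_eqI iffI)
    fix i assume "i \<in> {i. i < n \<and> peel n x i \<noteq> 0}"
    then show "i \<in> {i. i < n \<and> x i \<noteq> 0} - {k}"
      using k by (auto simp: peel_eq[OF x] abs_if split: if_splits)
  next
    fix i assume i: "i \<in> {i. i < n \<and> x i \<noteq> 0} - {k}"
    then have "\<bar>x i\<bar> \<noteq> min_abs n x" using inj k unfolding abs_injective_def by auto
    then show "i \<in> {i. i < n \<and> peel n x i \<noteq> 0}"
      using i min_abs_le[of i n x] by (auto simp: peel_eq[OF x] abs_if)
  qed
  then show ?thesis unfolding num_nonzero_def using k by simp
qed

lemma num_nonzero_0_imp_zero:
  assumes "x \<in> Rn n" "num_nonzero n x = 0"
  shows "x = (\<lambda>i. 0)"
proof
  fix i
  have "{i. i < n \<and> x i \<noteq> 0} = {}" using assms(2) by (simp add: num_nonzero_def)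
  then show "x i = 0" using assms(1) by (cases "i < n") (auto simp: Rn_def)
qed

text \<open>Peel off the smallest absolute value times the sign pattern until nothing is left.\<close>
lemma W_ray_chain_decomp:
  assumes "x \<in> W n" "abs_injective n x"
  shows "\<exists>E c. ray_chain n E \<and> (\<forall>e\<in>E. 0 < c e) \<and> x = ray_comb n E c
           \<and> (\<forall>e\<in>E. pair_le e (num_pos n x, num_neg n x)) \<and> card E = num_nonzero n x"
  using assms
proof (induction "num_nonzero n x" arbitrary: x rule: less_induct)
  case less
  note xW = less.prems(1) and inj = less.prems(2)
  show ?case
  proof (cases "num_nonzero n x = 0")
    case True
    then have "x = ray_comb n {} c" for c
      using num_nonzero_0_imp_zero[OF W_Rn[OF xW]] by (simp add: ray_comb_def)
    moreover have "ray_chain n {}" by (simp add: ray_chain_def)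
    ultimately show ?thesis using True by (intro exI[of _ "{}"] exI[of _ "\<lambda>_. 1"]) simp
  next
    case nz: False
    define x' where "x' = peel n x"
    define t where "t = (num_pos n x, num_neg n x)"
    have x'W: "x' \<in> W n" using peel_W[OF xW] by (simp add: x'_def)
    have card': "num_nonzero n x' = num_nonzero n x - 1"
      using num_nonzero_peel[OF xW inj nz] by (simp add: x'_def)
    obtain E' c' where IH: "ray_chain n E'" "\<forall>e\<in>E'. 0 < c' e" "x' = ray_comb n E' c'"
      "\<forall>e\<in>E'. pair_le e (num_pos n x', num_neg n x')" "card E' = num_nonzero n x'"
      using less.hyps[of x'] x'W abs_injective_peel[OF xW inj] card' nz by (auto simp: x'_def)
    have below: "pair_le e t" if "e \<in> E'" for e
      using IH(4) that num_pos_peel[OF xW] num_neg_peel[OF xW]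
      by (auto simp: pair_le_def t_def x'_def)
    have tE': "t \<notin> E'"
    proof
      assume "t \<in> E'"
      then have "num_nonzero n x \<le> num_nonzero n x'"
        using IH(4) num_nonzero_split[of n x] num_nonzero_split[of n x']
        by (auto simp: pair_le_def t_def)
      then show False using card' nz by simp
    qed
    have finE': "finite E'" using ray_chain_finite IH(1) by blast
    have "t \<in> ray_index n"
      using nz num_nonzero_split[of n x] num_nonzero_le[of n x] by (auto simp: ray_index_def t_def)
    then have "ray_chain n (insert t E')"
      using IH(1) below unfolding ray_chain_def by (auto simp: pair_le_def)
    moreover have "\<forall>e\<in>insert t E'. 0 < (c'(t := min_abs n x)) e"
    proof -
      obtain k where "k < n" "x k \<noteq> 0" "\<bar>x k\<bar> = min_abs n x"
        using min_abs_attained[OF nz] .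
      then show ?thesis using IH(2) tE' by auto
    qed
    moreover have "x = ray_comb n (insert t E') (c'(t := min_abs n x))"
    proof
      fix i
      have "x' i = ray_comb n E' c' i" using IH(3) by simp
      then show "x i = ray_comb n (insert t E') (c'(t := min_abs n x)) i"
        unfolding ray_comb_insert[OF finE' tE'] by (simp add: x'_def peel_def t_def)
    qed
    moreover have "\<forall>e\<in>insert t E'. pair_le e t" using below by (simp add: pair_le_def)
    moreover have "card (insert t E') = num_nonzero n x" using IH(5) card' finE' tE' nz by simp
    ultimately show ?thesis unfolding t_def by blast
  qed
qed

lemma ray_chain_level_bij:
  assumes ch: "ray_chain n E" and cE: "card E = n"
  shows "bij_betw (\<lambda>e. fst e + snd e) E {1..n}"
proof -
  have inj: "inj_on (\<lambda>e. fst e + snd e) E"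
  proof (rule inj_onI)
    fix e e' assume "e \<in> E" "e' \<in> E" "fst e + snd e = fst e' + snd e'"
    moreover then have "pair_le e e' \<or> pair_le e' e" using ch by (auto simp: ray_chain_def)
    ultimately show "e = e'" by (auto simp: pair_le_def prod_eq_iff)
  qed
  moreover have sub: "(\<lambda>e. fst e + snd e) ` E \<subseteq> {1..n}"
    using ch by (auto simp: ray_chain_def ray_index_def)
  ultimately show ?thesis
    unfolding bij_betw_def using card_subset_eq[OF finite_atLeastAtMost sub] card_image[OF inj] cE
    by simp
qed

text \<open>An n-element chain meets each level p + q = m, 1 \<le> m \<le> n, exactly once, and consecutive
  elements differ by a single lattice step.\<close>
lemma ray_chain_card_eq_path_chain:
  assumes ch: "ray_chain n E" and cE: "card E = n"
  shows "\<exists>s. E = path_chain n s"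
proof -
  define sm :: "nat \<times> nat \<Rightarrow> nat" where "sm e = fst e + snd e" for e
  have "bij_betw sm E {1..n}" using ray_chain_level_bij[OF ch cE] by (simp add: sm_def[abs_def])
  then have inj: "inj_on sm E" and img: "sm ` E = {1..n}" by (auto simp: bij_betw_def)
  have sub: "sm ` E \<subseteq> {1..n}" using img by simp
  have "\<forall>m\<in>{1..n}. \<exists>e\<in>E. sm e = m" using img by (metis imageE)
  then obtain el where el: "\<forall>m\<in>{1..n}. el m \<in> E \<and> sm (el m) = m" by metis
  define el0 where "el0 m = (if m = 0 then (0,0) else el m)" for m
  define s where "s j = (fst (el0 j) < fst (el0 (Suc j)))" for j
  have pt: "path_pt s m = el0 m" if "m \<le> n" for m
    using that
  proof (induction m)
    case 0 then show ?case by (simp add: el0_def)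
  next
    case (Suc m)
    have e1: "el0 (Suc m) \<in> E" "sm (el0 (Suc m)) = Suc m" using el Suc.prems
      by (auto simp: el0_def)
    have s0: "sm (el0 m) = m" using el Suc.prems by (cases "m = 0") (auto simp: el0_def sm_def)
    have le: "pair_le (el0 m) (el0 (Suc m))"
    proof (cases "m = 0")
      case True then show ?thesis by (simp add: el0_def pair_le_def)
    next
      case False
      then have "el0 m \<in> E" using el Suc.prems by (auto simp: el0_def)
      then have "pair_le (el0 m) (el0 (Suc m)) \<or> pair_le (el0 (Suc m)) (el0 m)" using ch e1
        by (auto simp: ray_chain_def)
      then show ?thesis using e1 s0 by (auto simp: pair_le_def sm_def)
    qed
    have IH: "path_pt s m = el0 m" using Suc by simp
    have sm: "s m = (fst (el0 m) < fst (el0 (Suc m)))" by (simp add: s_def)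
    show ?case
      using le e1(2) s0 IH sm by (auto simp: pair_le_def sm_def prod_eq_iff)
  qed
  have "E = path_pt s ` {1..n}"
  proof
    show "E \<subseteq> path_pt s ` {1..n}"
    proof
      fix e assume e: "e \<in> E"
      then have m: "sm e \<in> {1..n}" using sub by auto
      then have "el (sm e) = e" using el inj e by (metis inj_on_def)
      then have "path_pt s (sm e) = e" using pt[of "sm e"] m by (auto simp: el0_def)
      then show "e \<in> path_pt s ` {1..n}" using m by (metis imageI)
    qed
    show "path_pt s ` {1..n} \<subseteq> E" using pt el by (auto simp: el0_def)
  qed
  then show ?thesis by (auto simp: path_chain_def)
qed

lemma generic_in_open_chamber:
  assumes x: "x \<in> generic n"
  shows "\<exists>s. x \<in> open_chamber n s"
proof -
  have xW: "x \<in> W n" and nz: "\<forall>i<n. x i \<noteq> 0" and inj: "abs_injective n x"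
    using x W0_W by (auto simp: generic_iff)
  have "{i. i < n \<and> x i \<noteq> 0} = {..<n}" using nz by auto
  then have "num_nonzero n x = n" by (simp add: num_nonzero_def)
  then obtain E c where E: "ray_chain n E" "\<forall>e\<in>E. 0 < c e" "x = ray_comb n E c"
      "card E = n"
    using W_ray_chain_decomp[OF xW inj] by metis
  obtain s where "E = path_chain n s" using ray_chain_card_eq_path_chain[OF E(1) E(4)] by blast
  then show ?thesis using E unfolding open_chamber_eq_comb by blast
qed

section \<open>Chambers\<close>

lemma continuous_path_val: "continuous_on UNIV (path_val n s j)"
proof (cases "j < n")
  case True
  have "path_val n s j = (\<lambda>y. path_sign s j * y (path_coord n s j))" using True
    by (simp add: path_val_def fun_eq_iff)
  then show ?thesis by (simp add: continuous_on_mult_left)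
next
  case False
  then have "path_val n s j = (\<lambda>y. 0)" by (simp add: path_val_def fun_eq_iff)
  then show ?thesis by simp
qed

lemma closed_Rn: "closed (Rn n)"
proof -
  have "Rn n = (\<Inter>i\<in>{n..}. {y. y i = 0})" by (auto simp: Rn_def)
  then show ?thesis by (simp add: closed_INT closed_Collect_eq)
qed

lemma closed_ray_cone_path_chain: "closed (ray_cone n (path_chain n s))"
proof -
  have "ray_cone n (path_chain n s) = Rn n \<inter>
        (\<Inter>j\<in>{..<n}. {y. path_val n s (Suc j) y \<le> path_val n s j y})"
    unfolding ray_cone_path_chain by auto
  moreover have "closed {y. path_val n s (Suc j) y \<le> path_val n s j y}" for j
    by (rule closed_Collect_le[OF continuous_path_val continuous_path_val])
  ultimately show ?thesis using closed_Rn by (auto intro!: closed_Int closed_INT)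
qed

lemma open_chamber_subset_generic: "open_chamber n s \<subseteq> generic n"
  using open_chamber_generic by blast

lemma generic_Rn: "generic n \<subseteq> Rn n"
  by (auto simp: generic_def W0_def)

lemma openin_open_chamber: "openin (top_of_set (generic n)) (open_chamber n s)"
proof -
  let ?U = "\<Inter>j\<in>{..<n}. {y. path_val n s (Suc j) y < path_val n s j y}"
  have "open_chamber n s = generic n \<inter> ?U"
    using generic_Rn open_chamber_subset_generic unfolding open_chamber_def by blast
  moreover have "open ?U"
    by (intro open_INT finite_lessThan ballI open_Collect_less continuous_path_val)
  ultimately show ?thesis by (simp add: openin_open_Int)
qed

lemma open_chamber_subset_cone: "open_chamber n s \<subseteq> ray_cone n (path_chain n s)"
  unfolding open_chamber_eq_comb ray_cone_def by (auto intro: less_imp_le)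

text \<open>A generic point of the closed cone lies in some open chamber; uniqueness of the chain
  representation forces that chamber to be this one.\<close>
lemma closedin_open_chamber: "closedin (top_of_set (generic n)) (open_chamber n s)"
proof -
  have "open_chamber n s = generic n \<inter> ray_cone n (path_chain n s)"
  proof
    show "open_chamber n s \<subseteq> generic n \<inter> ray_cone n (path_chain n s)"
      using open_chamber_subset_generic open_chamber_subset_cone by blast
    show "generic n \<inter> ray_cone n (path_chain n s) \<subseteq> open_chamber n s"
    proof
      fix y assume y: "y \<in> generic n \<inter> ray_cone n (path_chain n s)"
      obtain s' where s': "y \<in> open_chamber n s'" using generic_in_open_chamber y by blast
      obtain c' where c': "y = ray_comb n (path_chain n s') c'" "\<forall>e\<in>path_chain n s'. 0 < c' e"
        using s' unfolding open_chamber_eq_comb by blast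
      obtain c where c: "y = ray_comb n (path_chain n s) c" "\<forall>e\<in>path_chain n s. 0 \<le> c e"
        using y unfolding ray_cone_def by blast
      define E where "E = {e\<in>path_chain n s. c e \<noteq> 0}"
      have yE: "y = ray_comb n E c" using c(1) ray_comb_restrict_nonzero[OF finite_path_chain]
        by (simp add: E_def)
      have posE: "\<forall>e\<in>E. 0 < c e" using c(2) by (auto simp: E_def order_le_less)
      have chE: "ray_chain n E" by (rule ray_chain_subset_path_chain[of _ n s]) (auto simp: E_def)
      have "E = path_chain n s'"
        using ray_chain_comb_unique[OF chE ray_chain_path_chain posE c'(2)] yE c'(1) by simp
      then have "card E = card (path_chain n s)" by (simp add: card_path_chain)
      then have "E = path_chain n s" using card_subset_eq[OF finite_path_chain, of E]
        by (auto simp: E_def)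
      then have "\<forall>e\<in>path_chain n s. 0 < c e" using posE by simp
      then show "y \<in> open_chamber n s" unfolding open_chamber_eq_comb using c(1) by blast
    qed
  qed
  then show ?thesis by (metis closedin_closed_Int[OF closed_ray_cone_path_chain])
qed

definition segment_map :: "(nat \<Rightarrow> real) \<Rightarrow>
                           (nat \<Rightarrow> real) \<Rightarrow> real \<Rightarrow> nat \<Rightarrow> real" where
  "segment_map y z t = (\<lambda>i. (1 - t) * y i + t * z i)"

lemma continuous_segment_map: "continuous_on S (segment_map y z)"
  unfolding segment_map_def by (intro continuous_on_coordinatewise_then_product continuous_intros)

lemma path_val_segment_map:
  "path_val n s j (segment_map y z t) = (1 - t) * path_val n s j y + t * path_val n s j z"
  by (simp add: path_val_def segment_map_def algebra_simps)

lemma segment_map_Rn: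
  "y \<in> Rn n \<Longrightarrow> z \<in> Rn n \<Longrightarrow> segment_map y z t \<in> Rn n"
  by (simp add: Rn_def segment_map_def)

lemma segment_map_open_chamber:
  assumes y: "y \<in> ray_cone n (path_chain n s)" and z: "z \<in> open_chamber n s"
    and t: "0 < t" "t \<le> 1"
  shows "segment_map y z t \<in> open_chamber n s"
proof -
  have "path_val n s (Suc j) (segment_map y z t) < path_val n s j (segment_map y z t)"
    if j: "j < n" for j
  proof -
    have "path_val n s (Suc j) y \<le> path_val n s j y" using y j unfolding ray_cone_path_chain by auto
    then have "(1 - t) * path_val n s (Suc j) y \<le> (1 - t) * path_val n s j y"
      using t by (intro mult_left_mono) auto
    moreover have "t * path_val n s (Suc j) z < t * path_val n s j z"
      using z j t by (auto simp: open_chamber_def)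
    ultimately show ?thesis unfolding path_val_segment_map by simp
  qed
  moreover have "y \<in> Rn n" using y ray_cone_path_chain by auto
  ultimately show ?thesis using z segment_map_Rn by (auto simp: open_chamber_def)
qed

lemma connected_open_chamber: "connected (open_chamber n s)"
proof -
  have "path_connected (open_chamber n s)"
    unfolding path_connected_def
  proof (intro ballI)
    fix y z assume yz: "y \<in> open_chamber n s" "z \<in> open_chamber n s"
    have "path (segment_map y z)" unfolding path_def by (rule continuous_segment_map)
    moreover have "segment_map y z t \<in> open_chamber n s" if t: "t \<in> {0..1}" for t
    proof (cases "t = 0")
      case True then show ?thesis using yz(1) by (simp add: segment_map_def)
    next
      case False
      have "y \<in> ray_cone n (path_chain n s)" using yz(1) open_chamber_subset_cone by blast
      then show ?thesis using segment_map_open_chamber[OF _ yz(2)] t False by simp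
    qed
    then have "path_image (segment_map y z) \<subseteq> open_chamber n s"
      unfolding path_image_def by auto
    moreover have "pathstart (segment_map y z) = y" "pathfinish (segment_map y z) = z"
      by (simp_all add: pathstart_def pathfinish_def segment_map_def)
    ultimately show "\<exists>g. path g \<and> path_image g \<subseteq> open_chamber n s \<and>
                     pathstart g = y \<and> pathfinish g = z"
      by blast
  qed
  then show ?thesis by (rule path_connected_imp_connected)
qed

lemma component_open_chamber:
  assumes x: "x \<in> open_chamber n s"
  shows "connected_component_set (generic n) x = open_chamber n s"
proof
  show "open_chamber n s \<subseteq> connected_component_set (generic n) x"
    by (rule connected_component_maximal[OF x connected_open_chamber open_chamber_subset_generic])
  let ?C = "connected_component_set (generic n) x"
  have "connectedin (top_of_set (generic n)) ?C"
    using connected_component_subset connected_connected_component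
    by (simp add: connectedin_subtopology)
  then have "?C \<subseteq> open_chamber n s \<or> disjnt ?C (open_chamber n s)"
    using connectedin_clopen_cases closedin_open_chamber openin_open_chamber by blast
  moreover have "x \<in> ?C" using x open_chamber_subset_generic by auto
  ultimately show "?C \<subseteq> open_chamber n s" using x unfolding disjnt_def by blast
qed

lemma open_chamber_witness: "ray_comb n (path_chain n s) (\<lambda>_. 1) \<in> open_chamber n s"
  unfolding open_chamber_eq_comb by auto

lemma closure_open_chamber: "closure (open_chamber n s) = ray_cone n (path_chain n s)"
proof
  show "closure (open_chamber n s) \<subseteq> ray_cone n (path_chain n s)"
    by (rule closure_minimal[OF open_chamber_subset_cone closed_ray_cone_path_chain])
  show "ray_cone n (path_chain n s) \<subseteq> closure (open_chamber n s)"
  proof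
    fix y assume y: "y \<in> ray_cone n (path_chain n s)"
    define z where "z = ray_comb n (path_chain n s) (\<lambda>_. 1)"
    have z: "z \<in> open_chamber n s" using open_chamber_witness z_def by simp
    define w where "w k = segment_map y z (1 / real (Suc k))" for k
    have "w k \<in> open_chamber n s" for k
      unfolding w_def by (rule segment_map_open_chamber[OF y z]) auto
    moreover have "w \<longlonglongrightarrow> y"
    proof -
      have "(\<lambda>k. 1 / real (Suc k)) \<longlonglongrightarrow> 0"
        by (rule LIMSEQ_Suc[OF lim_inverse_n'])
      then have "(\<lambda>k. segment_map y z (1 / real (Suc k))) \<longlonglongrightarrow>
                 segment_map y z 0"
        by (rule continuous_on_tendsto_compose[OF continuous_segment_map[of UNIV y z]]) auto
      moreover have "segment_map y z 0 = y" by (simp add: segment_map_def)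
      ultimately have "(\<lambda>k. segment_map y z (1 / real (Suc k))) \<longlonglongrightarrow> y"
        by simp
      then show ?thesis unfolding w_def .
    qed
    ultimately show "y \<in> closure (open_chamber n s)" unfolding closure_sequential by blast
  qed
qed

lemma chambers_eq: "chambers n = {ray_cone n (path_chain n s) | s. True}"
proof
  show "chambers n \<subseteq> {ray_cone n (path_chain n s) | s. True}"
  proof
    fix C assume "C \<in> chambers n"
    then obtain x where x: "x \<in> generic n" "C = closure (connected_component_set (generic n) x)"
      by (auto simp: chambers_def generic_def)
    obtain s where s: "x \<in> open_chamber n s" using generic_in_open_chamber[OF x(1)] by blast
    then have "C = ray_cone n (path_chain n s)" using x component_open_chamber closure_open_chamber
      by simp
    then show "C \<in> {ray_cone n (path_chain n s) | s. True}" by blast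
  qed
  show "{ray_cone n (path_chain n s) | s. True} \<subseteq> chambers n"
  proof
    fix C assume "C \<in> {ray_cone n (path_chain n s) | s. True}"
    then obtain s where s: "C = ray_cone n (path_chain n s)" by blast
    define z where "z = ray_comb n (path_chain n s) (\<lambda>_. 1)"
    have z: "z \<in> open_chamber n s" using open_chamber_witness z_def by simp
    then have "C = closure (connected_component_set (generic n) z)"
      using s component_open_chamber closure_open_chamber by simp
    moreover have "z \<in> W0 n - arr_union n" using open_chamber_subset_generic z
      by (auto simp: generic_def)
    ultimately show "C \<in> chambers n" unfolding chambers_def generic_def by blast
  qed
qed

section \<open>Faces\<close>

lemma lin_form_ray_comb:
  "lin_form n a (ray_comb n E c) = (\<Sum>e\<in>E. c e * lin_form n a (ray n e))"
proof -
  have "lin_form n a (ray_comb n E c) = (\<Sum>i<n. \<Sum>e\<in>E. a i * (c e * ray n e i))"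
    unfolding lin_form_def ray_comb_def by (simp add: sum_distrib_left)
  also have "\<dots> = (\<Sum>e\<in>E. \<Sum>i<n. c e * (a i * ray n e i))"
    by (subst sum.swap) (simp add: mult.left_commute)
  also have "\<dots> = (\<Sum>e\<in>E. c e * lin_form n a (ray n e))"
    unfolding lin_form_def by (simp add: sum_distrib_left)
  finally show ?thesis .
qed

lemma ray_comb_zero: "ray_comb n E (\<lambda>_. 0) = (\<lambda>i. 0)"
  by (simp add: ray_comb_def)

lemma lin_form_zero: "lin_form n a (\<lambda>i. 0) = 0"
  by (simp add: lin_form_def)

lemma ray_eq_ray_comb:
  assumes "finite E" "e \<in> E"
  shows "ray n e = ray_comb n E (\<lambda>e'. if e' = e then 1 else 0)"
proof
  fix i
  have "ray_comb n E (\<lambda>e'. if e' = e then 1 else 0) i =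
        (\<Sum>e'\<in>E. if e' = e then ray n e i else 0)"
    unfolding ray_comb_def by (rule sum.cong) auto
  also have "\<dots> = ray n e i" using assms by (simp add: sum.delta')
  finally show "ray n e i = ray_comb n E (\<lambda>e'. if e' = e then 1 else 0) i" by simp
qed

lemma ray_coneI: "\<forall>e\<in>E. 0 \<le> c e \<Longrightarrow> ray_comb n E c \<in> ray_cone n E"
  unfolding ray_cone_def by blast

lemma ray_in_ray_cone:
  "finite E \<Longrightarrow> e \<in> E \<Longrightarrow> ray n e \<in> ray_cone n E"
proof -
  assume a: "finite E" "e \<in> E"
  have "ray_comb n E (\<lambda>e'. if e' = e then 1 else 0) \<in> ray_cone n E"
    by (rule ray_coneI) simp
  then show ?thesis using ray_eq_ray_comb[OF a] by simp
qed

lemma zero_in_ray_cone: "(\<lambda>i. 0) \<in> ray_cone n E"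
proof -
  have "ray_comb n E (\<lambda>_. 0) \<in> ray_cone n E" by (rule ray_coneI) simp
  then show ?thesis by (simp add: ray_comb_zero)
qed

lemma ray_cone_Int_hyperplane:
  assumes fin: "finite M" and MT: "M \<subseteq> ray_index n"
    and neg: "\<forall>e\<in>M. lin_form n a (ray n e) \<le> 0"
  shows "ray_cone n M \<inter> {x \<in> Rn n. lin_form n a x = 0} =
         ray_cone n {e\<in>M. lin_form n a (ray n e) = 0}"
proof (intro set_eqI iffI)
  fix x assume x: "x \<in> ray_cone n M \<inter> {x \<in> Rn n. lin_form n a x = 0}"
  then obtain c where c: "x = ray_comb n M c" "\<forall>e\<in>M. 0 \<le> c e" unfolding ray_cone_def
    by blast
  have "(\<Sum>e\<in>M. c e * lin_form n a (ray n e)) = 0" using x c lin_form_ray_comb by simp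
  then have s0: "(\<Sum>e\<in>M. - (c e * lin_form n a (ray n e))) = 0" by (simp add: sum_negf)
  have nn: "\<forall>e\<in>M. 0 \<le> - (c e * lin_form n a (ray n e))"
    using c(2) neg by (simp add: mult_nonneg_nonpos)
  have z0: "\<forall>e\<in>M. - (c e * lin_form n a (ray n e)) = 0"
    using sum_nonneg_eq_0_iff[OF fin, of "\<lambda>e. - (c e * lin_form n a (ray n e))"] nn s0
    by blast
  have z: "\<forall>e\<in>M. lin_form n a (ray n e) \<noteq> 0 \<longrightarrow> c e = 0"
    using z0 by auto
  have "x = ray_comb n {e\<in>M. lin_form n a (ray n e) = 0} c"
    unfolding c(1) ray_comb_def
  proof (rule ext, rule sum.mono_neutral_right[OF fin])
    fix i
    show "{e\<in>M. lin_form n a (ray n e) = 0} \<subseteq> M" by auto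
    show "\<forall>e\<in>M - {e\<in>M. lin_form n a (ray n e) = 0}. c e * ray n e i = 0" using z
      by auto
  qed
  then show "x \<in> ray_cone n {e\<in>M. lin_form n a (ray n e) = 0}" unfolding ray_cone_def
    using c(2) by auto
next
  fix x assume x: "x \<in> ray_cone n {e\<in>M. lin_form n a (ray n e) = 0}"
  then obtain c where c: "x = ray_comb n {e\<in>M. lin_form n a (ray n e) = 0} c"
      "\<forall>e\<in>{e\<in>M. lin_form n a (ray n e) = 0}. 0 \<le> c e"
    unfolding ray_cone_def by blast
  define c' where "c' e = (if lin_form n a (ray n e) = 0 then c e else 0)" for e
  have "x = ray_comb n M c'"
    unfolding c(1) ray_comb_def c'_def
    by (rule ext, rule sum.mono_neutral_cong_left[OF fin]) auto
  moreover have "\<forall>e\<in>M. 0 \<le> c' e" using c(2) by (auto simp: c'_def)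
  ultimately have "x \<in> ray_cone n M" unfolding ray_cone_def by blast
  moreover have "lin_form n a x = 0" using c(1) by (simp add: lin_form_ray_comb)
  moreover have "x \<in> Rn n" unfolding c(1) by (rule ray_comb_Rn) (use MT in auto)
  ultimately show "x \<in> ray_cone n M \<inter> {x \<in> Rn n. lin_form n a x = 0}" by simp
qed

definition coord_form :: "nat \<Rightarrow> (nat \<Rightarrow> bool) \<Rightarrow> nat \<Rightarrow> nat \<Rightarrow> real" where
  "coord_form n s j = (\<lambda>i. if j < n \<and> i = path_coord n s j then path_sign s j else 0)"

lemma lin_form_coord_form: "lin_form n (coord_form n s j) y = path_val n s j y"
proof (cases "j < n")
  case True
  have "lin_form n (coord_form n s j) y =
        (\<Sum>i<n. if i = path_coord n s j then path_sign s j * y i else 0)"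
    unfolding lin_form_def coord_form_def using True by (intro sum.cong) auto
  also have "\<dots> = path_sign s j * y (path_coord n s j)" using path_coord_lt[OF True] by simp
  finally show ?thesis using True by (simp add: path_val_def)
next
  case False
  then show ?thesis by (simp add: lin_form_def coord_form_def path_val_def)
qed

lemma lin_form_sum:
  "lin_form n (\<lambda>i. \<Sum>m\<in>M. f m i) y = (\<Sum>m\<in>M. lin_form n (f m) y)"
  unfolding lin_form_def by (simp add: sum_distrib_right) (rule sum.swap)

lemma lin_form_diff: "lin_form n (\<lambda>i. f i - h i) y = lin_form n f y - lin_form n h y"
  unfolding lin_form_def by (simp add: left_diff_distrib sum_subtractf)

lemma lin_form_neg: "lin_form n (\<lambda>i. - f i) y = - lin_form n f y"
  unfolding lin_form_def by (simp add: sum_negf)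

text \<open>Minus the sum of the coefficients, in the chamber's ray decomposition, of the path rays
  outside E.\<close>
definition face_normal :: "nat \<Rightarrow> (nat \<Rightarrow> bool) \<Rightarrow> (nat \<times> nat) set \<Rightarrow> nat \<Rightarrow> real" where
  "face_normal n s E = (\<lambda>i.
     - (\<Sum>m\<in>{m\<in>{1..n}. path_pt s m \<notin> E}. coord_form n s (m - 1) i - coord_form n s m i))"

lemma lin_form_face_normal:
  "lin_form n (face_normal n s E) y =
    - (\<Sum>m\<in>{m\<in>{1..n}. path_pt s m \<notin> E}. path_val n s (m - 1) y - path_val n s m y)"
  unfolding face_normal_def lin_form_neg lin_form_sum lin_form_diff lin_form_coord_form ..

lemma lin_form_face_normal_ray:
  assumes m: "m' \<in> {1..n}"
  shows "lin_form n (face_normal n s E) (ray n (path_pt s m')) =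
         (if path_pt s m' \<in> E then 0 else -1)"
proof -
  let ?J = "{m\<in>{1..n}. path_pt s m \<notin> E}"
  have "lin_form n (face_normal n s E) (ray n (path_pt s m')) = - (\<Sum>m\<in>?J. if m = m' then 1 else 0)"
    unfolding lin_form_face_normal
  proof (intro arg_cong[where f = uminus] sum.cong refl)
    fix m assume "m \<in> ?J"
    then have "1 \<le> m" "m \<le> n" by auto
    then show "path_val n s (m - 1) (ray n (path_pt s m')) - path_val n s m (ray n (path_pt s m')) =
               (if m = m' then 1 else 0)"
      using m by (auto simp: path_val_ray)
  qed
  also have "\<dots> = (if path_pt s m' \<in> E then 0 else -1)" using m by (simp add: sum.delta')
  finally show ?thesis .
qed

lemma face_normal_Rn: "face_normal n s E \<in> Rn n"
proof -
  have "coord_form n s j i = 0" if "n \<le> i" for j i using that path_coord_lt[of j n s]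
    by (auto simp: coord_form_def)
  then show ?thesis by (simp add: Rn_def face_normal_def)
qed

lemma lin_form_ray_cone_nonpos:
  assumes "\<forall>e\<in>M. lin_form n a (ray n e) \<le> 0" "x \<in> ray_cone n M"
  shows "lin_form n a x \<le> 0"
proof -
  obtain c where c: "x = ray_comb n M c" "\<forall>e\<in>M. 0 \<le> c e" using assms(2)
    unfolding ray_cone_def by blast
  have "lin_form n a x = (\<Sum>e\<in>M. c e * lin_form n a (ray n e))" using c(1) lin_form_ray_comb
    by simp
  also have "\<dots> \<le> 0" using c(2) assms(1)
    by (intro sum_nonpos) (simp add: mult_nonneg_nonpos)
  finally show ?thesis .
qed

text \<open>A cone is invariant under scaling, so a supporting hyperplane passes through the origin.\<close>
lemma supporting_ray_cone_offset:
  assumes sup: "supporting n a b (ray_cone n M)"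
  shows "b = 0"
proof -
  have le: "ray_cone n M \<subseteq> {x. lin_form n a x \<le> b}" and ne: "ray_cone n M \<inter>
            {x \<in> Rn n. lin_form n a x = b} \<noteq> {}"
    using sup by (auto simp: supporting_def)
  have b0: "0 \<le> b" using le zero_in_ray_cone[of n M] lin_form_zero[of n a] by auto
  obtain y where y: "y \<in> ray_cone n M" "lin_form n a y = b" using ne by blast
  obtain c where c: "y = ray_comb n M c" "\<forall>e\<in>M. 0 \<le> c e" using y
    unfolding ray_cone_def by blast
  have "ray_comb n M (\<lambda>e. 2 * c e) \<in> ray_cone n M" using c(2) by (intro ray_coneI) simp
  moreover have "lin_form n a (ray_comb n M (\<lambda>e. 2 * c e)) = 2 * b"
    using y c by (simp add: lin_form_ray_comb sum_distrib_left[symmetric] mult.assoc)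
  ultimately have "2 * b \<le> b" using le by auto
  then show ?thesis using b0 by simp
qed

lemma face_of_path_cone:
  assumes sup: "supporting n a b (ray_cone n (path_chain n s))"
  shows "ray_cone n (path_chain n s) \<inter> {x \<in> Rn n. lin_form n a x = b}
           = ray_cone n {e\<in>path_chain n s. lin_form n a (ray n e) = 0}"
proof -
  have b: "b = 0" by (rule supporting_ray_cone_offset[OF sup])
  have "\<forall>e\<in>path_chain n s. lin_form n a (ray n e) \<le> 0"
  proof
    fix e assume "e \<in> path_chain n s"
    then have "ray n e \<in> ray_cone n (path_chain n s)"
      by (rule ray_in_ray_cone[OF finite_path_chain])
    then show "lin_form n a (ray n e) \<le> 0" using sup b by (auto simp: supporting_def)
  qed
  then show ?thesis using b ray_cone_Int_hyperplane[OF finite_path_chain path_chain_ray_index]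
    by simp
qed

lemma path_subcone_is_face:
  assumes Es: "E \<subseteq> path_chain n s" and ne: "E \<noteq> path_chain n s"
  shows "supporting n (face_normal n s E) 0 (ray_cone n (path_chain n s))"
    and "ray_cone n (path_chain n s) \<inter> {x \<in> Rn n. lin_form n (face_normal n s E) x = 0} =
         ray_cone n E"
proof -
  let ?a = "face_normal n s E"
  have L: "\<forall>e\<in>path_chain n s. lin_form n ?a (ray n e) = (if e \<in> E then 0 else -1)"
    using lin_form_face_normal_ray by (auto simp: path_chain_def)
  then have neg: "\<forall>e\<in>path_chain n s. lin_form n ?a (ray n e) \<le> 0" by simp
  obtain e where e: "e \<in> path_chain n s" "e \<notin> E" using Es ne by blast
  have nz: "\<exists>i<n. ?a i \<noteq> 0"
  proof (rule ccontr)
    assume "\<not> (\<exists>i<n. ?a i \<noteq> 0)"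
    then have "lin_form n ?a (ray n e) = 0" by (simp add: lin_form_def)
    then show False using L e by simp
  qed
  have "(\<lambda>i. 0) \<in> ray_cone n (path_chain n s) \<inter>
        {x \<in> Rn n. lin_form n ?a x = 0}"
    using zero_in_ray_cone lin_form_zero by (auto simp: Rn_def)
  then show "supporting n ?a 0 (ray_cone n (path_chain n s))"
    unfolding supporting_def using face_normal_Rn nz lin_form_ray_cone_nonpos[OF neg] by blast
  have "{e\<in>path_chain n s. lin_form n ?a (ray n e) = 0} = E" using L Es
    by (auto split: if_splits)
  then show "ray_cone n (path_chain n s) \<inter> {x \<in> Rn n. lin_form n ?a x = 0} =
             ray_cone n E"
    using ray_cone_Int_hyperplane[OF finite_path_chain path_chain_ray_index neg] by simp
qed

lemma faces_eq: "faces n = {ray_cone n E | E. \<exists>s. E \<subseteq> path_chain n s}"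
proof
  show "faces n \<subseteq> {ray_cone n E | E. \<exists>s. E \<subseteq> path_chain n s}"
  proof
    fix F assume "F \<in> faces n"
    then obtain C where C: "C \<in> chambers n" and
      F: "F = C \<or> (\<exists>a b. supporting n a b C \<and> F = C \<inter>
          {x \<in> Rn n. lin_form n a x = b})"
      unfolding faces_def by blast
    obtain s where s: "C = ray_cone n (path_chain n s)" using C chambers_eq by blast
    show "F \<in> {ray_cone n E | E. \<exists>s. E \<subseteq> path_chain n s}"
      using F face_of_path_cone s by blast
  qed
  show "{ray_cone n E | E. \<exists>s. E \<subseteq> path_chain n s} \<subseteq> faces n"
  proof
    fix F assume "F \<in> {ray_cone n E | E. \<exists>s. E \<subseteq> path_chain n s}"
    then obtain E s where F: "F = ray_cone n E" and Es: "E \<subseteq> path_chain n s" by blast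
    have C: "ray_cone n (path_chain n s) \<in> chambers n" using chambers_eq by blast
    show "F \<in> faces n"
    proof (cases "E = path_chain n s")
      case True then show ?thesis using C F unfolding faces_def by blast
    next
      case False then show ?thesis
        using C F path_subcone_is_face[OF Es False] unfolding faces_def by blast
    qed
  qed
qed

section \<open>Dimension of faces\<close>

lemma sum_fun_apply: "(\<Sum>x\<in>A. f x) i = (\<Sum>x\<in>A. f x i)"
  by (induction A rule: infinite_finite_induct) auto

interpretation fun_vec: vector_space "\<lambda>(r::real) (f::nat\<Rightarrow>real). (\<lambda>i. r * f i)"
  by unfold_locales (simp_all add: fun_eq_iff algebra_simps)

lemma lin_indep_iff:
  assumes "finite B"
  shows "lin_indep B \<longleftrightarrow> \<not> fun_vec.dependent B"
proof -
  have eq: "((\<Sum>v\<in>B. (\<lambda>i. u v * v i)) = 0) \<longleftrightarrow>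
            (\<forall>i. (\<Sum>v\<in>B. u v * v i) = 0)" for u
    by (simp add: fun_eq_iff sum_fun_apply)
  show ?thesis
    unfolding fun_vec.dependent_finite[OF assms] lin_indep_def eq by blast
qed

lemma ray_comb_in_span: "finite E \<Longrightarrow> ray_comb n E c \<in> fun_vec.span (ray n ` E)"
proof -
  assume fin: "finite E"
  have "ray_comb n E c = (\<Sum>e\<in>E. (\<lambda>i. c e * ray n e i))"
    by (simp add: fun_eq_iff sum_fun_apply ray_comb_def)
  also have "\<dots> \<in> fun_vec.span (ray n ` E)"
  proof (rule fun_vec.span_sum)
    fix e assume "e \<in> E"
    then have "ray n e \<in> fun_vec.span (ray n ` E)" by (intro fun_vec.span_base) simp
    then show "(\<lambda>i. c e * ray n e i) \<in> fun_vec.span (ray n ` E)"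
      by (rule fun_vec.span_scale)
  qed
  finally show ?thesis .
qed

lemma inj_on_ray_path_chain: "E \<subseteq> path_chain n s \<Longrightarrow> inj_on (ray n) E"
proof (rule inj_onI)
  fix e e' assume a: "E \<subseteq> path_chain n s" "e \<in> E" "e' \<in> E" "ray n e = ray n e'"
  obtain m where m: "m \<in> {1..n}" "e = path_pt s m" using a by (auto simp: path_chain_def)
  obtain m' where m': "m' \<in> {1..n}" "e' = path_pt s m'" using a by (auto simp: path_chain_def)
  have "path_val n s j (ray n (path_pt s m)) = path_val n s j (ray n (path_pt s m'))" for j
    using a m m' by simp
  then have T: "(if j < m then 1 else 0 :: real) = (if j < m' then 1 else 0)" for j
    using m m' by (simp add: path_val_ray)
  have "m = m'"
  proof (rule ccontr)
    assume "m \<noteq> m'"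
    then consider "m < m'" | "m' < m" by linarith
    then show False
    proof cases
      case 1 then show False using T[of m] by simp
    next
      case 2 then show False using T[of m'] by simp
    qed
  qed
  then show "e = e'" using m m' by simp
qed

lemma lin_indep_rays:
  assumes E: "E \<subseteq> path_chain n s"
  shows "lin_indep (ray n ` E)"
  unfolding lin_indep_def
proof (intro allI impI ballI)
  fix u v
  assume h: "\<forall>i. (\<Sum>v\<in>ray n ` E. u v * v i) = 0" and v: "v \<in> ray n ` E"
  define J where "J = {m\<in>{1..n}. path_pt s m \<in> E}"
  have EJ: "E = path_pt s ` J" using subset_path_chain_eq_image[OF E] by (simp add: J_def)
  have J: "J \<subseteq> {1..n}" by (auto simp: J_def)
  define c where "c e = u (ray n e)" for e
  have z: "ray_comb n E c = (\<lambda>i. 0)"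
  proof
    fix i
    have "ray_comb n E c i = (\<Sum>v\<in>ray n ` E. u v * v i)"
      unfolding ray_comb_def c_def by (simp add: sum.reindex[OF inj_on_ray_path_chain[OF E]])
    then show "ray_comb n E c i = 0" using h by simp
  qed
  obtain e where e: "e \<in> E" "v = ray n e" using v by blast
  obtain m where m: "m \<in> J" "e = path_pt s m" using e EJ by blast
  have m1: "1 \<le> m" "m \<le> n" using m J by auto
  have A1: "tail_weight c s J (m - 1) = 0"
    using path_val_comb_path_pt[OF J, of "m - 1" s c] z EJ m1 by (simp add: path_val_zero)
  have A2: "tail_weight c s J m = 0"
    using path_val_comb_path_pt[OF J, of m s c] z EJ m1 by (simp add: path_val_zero)
  have "tail_weight c s J (m - 1) = tail_weight c s J (Suc (m - 1)) +
        (if Suc (m - 1) \<in> J then c (path_pt s (Suc (m - 1))) else 0)"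
    using tail_weight_step[OF J, of "m - 1" c s] m1 by simp
  then have "c (path_pt s m) = 0" using A1 A2 m m1 by simp
  then show "u v = 0" using e m by (simp add: c_def)
qed

lemma span_dim_ray_cone:
  assumes E: "E \<subseteq> path_chain n s"
  shows "span_dim (ray_cone n E) = card E"
proof -
  have fin: "finite E" using E finite_path_chain finite_subset by blast
  let ?S = "{card B | B. finite B \<and> B \<subseteq> ray_cone n E \<and> lin_indep B}"
  have mem: "card E \<in> ?S"
  proof -
    have "card (ray n ` E) = card E" using card_image[OF inj_on_ray_path_chain[OF E]] .
    moreover have "ray n ` E \<subseteq> ray_cone n E" using ray_in_ray_cone[OF fin] by blast
    moreover have "lin_indep (ray n ` E)" by (rule lin_indep_rays[OF E])
    ultimately show ?thesis using fin by (metis (mono_tags, lifting) finite_imageI mem_Collect_eq)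
  qed
  have bound: "x \<le> card E" if "x \<in> ?S" for x
  proof -
    obtain B where B: "x = card B" "finite B" "B \<subseteq> ray_cone n E" "lin_indep B"
      using \<open>x \<in> ?S\<close> by blast
    have ind: "\<not> fun_vec.dependent B" using lin_indep_iff[OF B(2)] B(4) by simp
    have "B \<subseteq> fun_vec.span (ray n ` E)"
    proof
      fix b assume "b \<in> B"
      then obtain c where "b = ray_comb n E c" using B(3) unfolding ray_cone_def by blast
      then show "b \<in> fun_vec.span (ray n ` E)" using ray_comb_in_span[OF fin] by simp
    qed
    then have "card B \<le> card (ray n ` E)"
      using fun_vec.independent_span_bound[OF finite_imageI[OF fin] ind] by simp
    also have "\<dots> \<le> card E" by (rule card_image_le[OF fin])
    finally show ?thesis using B(1) by simp
  qed
  have finS: "finite ?S"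
  proof (rule finite_subset)
    show "?S \<subseteq> {..card E}" using bound by auto
  qed simp
  show ?thesis unfolding span_dim_def
    by (rule Max_eqI[OF finS]) (use bound mem in auto)
qed

lemma ray_cone_subset_imp_subset:
  assumes E: "E \<subseteq> path_chain n s" and E': "E' \<subseteq> path_chain n s'"
    and sub: "ray_cone n E \<subseteq> ray_cone n E'"
  shows "E \<subseteq> E'"
proof -
  have finE': "finite E'" using E' finite_path_chain finite_subset by blast
  have "ray_comb n E (\<lambda>_. 1) \<in> ray_cone n E" by (rule ray_coneI) simp
  then have "ray_comb n E (\<lambda>_. 1) \<in> ray_cone n E'" using sub by blast
  then obtain c' where c': "ray_comb n E (\<lambda>_. 1) = ray_comb n E' c'" "\<forall>e\<in>E'. 0 \<le> c' e"
    unfolding ray_cone_def by blast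
  define E'' where "E'' = {e\<in>E'. c' e \<noteq> 0}"
  have x: "ray_comb n E (\<lambda>_. 1) = ray_comb n E'' c'"
    using c'(1) ray_comb_restrict_nonzero[OF finE'] by (simp add: E''_def)
  have pos: "\<forall>e\<in>E''. 0 < c' e" using c'(2) by (auto simp: E''_def order_le_less)
  have ch: "ray_chain n E''"
    by (rule ray_chain_subset_path_chain[of _ n s']) (use E' in \<open>auto simp: E''_def\<close>)
  have "E = E''" using ray_chain_comb_unique[OF ray_chain_subset_path_chain[OF E] ch _ pos x]
    by simp
  then show ?thesis by (auto simp: E''_def)
qed

lemma ray_cone_inj:
  assumes "E \<subseteq> path_chain n s" "E' \<subseteq> path_chain n s'" "ray_cone n E = ray_cone n E'"
  shows "E = E'"
  using ray_cone_subset_imp_subset[OF assms(1,2)] ray_cone_subset_imp_subset[OF assms(2,1)] assms(3)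
  by blast

definition face_chains :: "nat \<Rightarrow> nat \<Rightarrow> (nat \<times> nat) set set" where
  "face_chains n k = {E. (\<exists>s. E \<subseteq> path_chain n s) \<and> card E = k}"

lemma num_kfaces_eq_card: "num_kfaces n k = card (face_chains n k)"
proof -
  have eq: "{F \<in> faces n. span_dim F = k} = ray_cone n ` face_chains n k"
  proof (intro set_eqI iffI)
    fix F assume "F \<in> {F \<in> faces n. span_dim F = k}"
    then obtain E s where F: "F = ray_cone n E" "E \<subseteq> path_chain n s" "span_dim F = k"
      unfolding faces_eq by blast
    then have "card E = k" using span_dim_ray_cone by simp
    then show "F \<in> ray_cone n ` face_chains n k" using F unfolding face_chains_def by blast
  next
    fix F assume "F \<in> ray_cone n ` face_chains n k"
    then obtain E s where F: "F = ray_cone n E" "E \<subseteq> path_chain n s" "card E = k"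
      unfolding face_chains_def by blast
    then have "span_dim F = k" using span_dim_ray_cone by simp
    moreover have "F \<in> faces n" unfolding faces_eq using F by blast
    ultimately show "F \<in> {F \<in> faces n. span_dim F = k}" by simp
  qed
  have inj: "inj_on (ray_cone n) (face_chains n k)"
  proof (rule inj_onI)
    fix E E' assume a: "E \<in> face_chains n k" "E' \<in> face_chains n k"
        "ray_cone n E = ray_cone n E'"
    then obtain s s' where "E \<subseteq> path_chain n s" "E' \<subseteq> path_chain n s'"
      unfolding face_chains_def by blast
    then show "E = E'" using ray_cone_inj a(3) by blast
  qed
  show ?thesis unfolding num_kfaces_def eq by (rule card_image[OF inj])
qed

section \<open>Counting chains\<close>

definition shift_pair :: "nat \<Rightarrow> nat \<Rightarrow> nat \<times> nat \<Rightarrow> nat \<times> nat" where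
  "shift_pair a b e = (fst e + a, snd e + b)"

lemma inj_shift_pair: "inj (shift_pair a b)"
  by (rule injI) (auto simp: shift_pair_def prod_eq_iff)

definition extend_chain :: "nat \<Rightarrow> nat \<Rightarrow> (nat \<times> nat) set \<Rightarrow> (nat \<times> nat) set" where
  "extend_chain l p E' = insert (p, l - p) (shift_pair p (l - p) ` E')"

lemma finite_face_chains: "finite (face_chains n k)"
proof (rule finite_subset)
  show "face_chains n k \<subseteq> Pow (ray_index n)" unfolding face_chains_def
    using path_chain_ray_index by blast
  show "finite (Pow (ray_index n))" using finite_ray_index by simp
qed

lemma face_chains_finite: "E \<in> face_chains n k \<Longrightarrow> finite E"
  unfolding face_chains_def using finite_path_chain finite_subset by blast

lemma face_chains_subset_ray_index: "E \<in> face_chains n k \<Longrightarrow> E \<subseteq> ray_index n"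
  unfolding face_chains_def using path_chain_ray_index by blast

lemma face_chains_0: "face_chains n 0 = {{}}"
proof (rule equalityI)
  show "face_chains n 0 \<subseteq> {{}}"
  proof (rule subsetI)
    fix E assume E: "E \<in> face_chains n 0"
    have "finite E" using face_chains_finite[OF E] .
    moreover have "card E = 0" using E unfolding face_chains_def by blast
    ultimately show "E \<in> {{}}" by simp
  qed
  have "{} \<in> face_chains n 0" unfolding face_chains_def by simp
  then show "{{}} \<subseteq> face_chains n 0" by simp
qed

lemma face_chains_empty: "n < k \<Longrightarrow> face_chains n k = {}"
proof -
  assume a: "n < k"
  have "card E \<le> n" if "E \<subseteq> path_chain n s" for E s
    using card_mono[OF finite_path_chain that] card_path_chain by simp
  then have "card E \<noteq> k" if "\<exists>s. E \<subseteq> path_chain n s" for E using a that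
    by (metis not_le)
  then show ?thesis unfolding face_chains_def by blast
qed

lemma shift_pair_notin: "E \<subseteq> ray_index m \<Longrightarrow> (p, q) \<notin> shift_pair p q ` E"
  by (auto simp: shift_pair_def ray_index_def)

lemma card_extend_chain:
  assumes "E \<subseteq> ray_index m" "finite E"
  shows "card (extend_chain l p E) = Suc (card E)"
  using shift_pair_notin[OF assms(1)] assms(2) card_image[OF inj_on_subset[OF inj_shift_pair subset_UNIV]]
  by (simp add: extend_chain_def)

lemma extend_chain_levels:
  assumes "E' \<in> face_chains m k" "p \<le> l" "1 \<le> l"
  shows "\<forall>e\<in>extend_chain l p E'. l \<le> fst e + snd e"
    and "\<forall>e\<in>extend_chain l p E'. fst e + snd e = l \<longrightarrow> e = (p, l - p)"
  using face_chains_subset_ray_index[OF assms(1)] assms(2,3)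
  by (auto simp: extend_chain_def shift_pair_def ray_index_def)

lemma extend_chain_inj:
  assumes E1: "E1 \<in> face_chains (n - l1) k" and E2: "E2 \<in> face_chains (n - l2) k"
    and pl: "p1 \<le> l1" "1 \<le> l1" "p2 \<le> l2" "1 \<le> l2"
    and eq: "extend_chain l1 p1 E1 = extend_chain l2 p2 E2"
  shows "l1 = l2 \<and> p1 = p2 \<and> E1 = E2"
proof -
  note s1 = extend_chain_levels[OF E1 pl(1,2)] and s2 = extend_chain_levels[OF E2 pl(3,4)]
  have "(p1, l1 - p1) \<in> extend_chain l1 p1 E1" by (simp add: extend_chain_def)
  then have m1: "(p1, l1 - p1) \<in> extend_chain l2 p2 E2" using eq by simp
  have "(p2, l2 - p2) \<in> extend_chain l2 p2 E2" by (simp add: extend_chain_def)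
  then have m2: "(p2, l2 - p2) \<in> extend_chain l1 p1 E1" using eq by simp
  have "l2 \<le> l1" using s2(1) m1 pl by auto
  moreover have "l1 \<le> l2" using s1(1) m2 pl by auto
  ultimately have l: "l1 = l2" by simp
  then have "(p1, l1 - p1) = (p2, l2 - p2)" using s2(2) m1 pl by auto
  then have p: "p1 = p2" by simp
  have n1: "(p1, l1 - p1) \<notin> shift_pair p1 (l1 - p1) ` E1"
    using shift_pair_notin face_chains_subset_ray_index[OF E1] by blast
  have n2: "(p2, l2 - p2) \<notin> shift_pair p2 (l2 - p2) ` E2"
    using shift_pair_notin face_chains_subset_ray_index[OF E2] by blast
  have "shift_pair p1 (l1 - p1) ` E1 = shift_pair p1 (l1 - p1) ` E2"
    using eq n1 n2 l p unfolding extend_chain_def by (metis insert_ident)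
  then have "E1 = E2" using inj_shift_pair by (simp add: inj_image_eq_iff)
  then show ?thesis using l p by simp
qed

lemma path_pt_prefix:
  "j \<le> l \<Longrightarrow> path_pt (\<lambda>j. if j < p then True else if j < l then False else s' (j - l)) j =
    (min j p, j - min j p)"
proof (induction j)
  case 0 then show ?case by simp
next
  case (Suc j)
  then show ?case by (auto simp: min_def)
qed

lemma extend_chain_in:
  assumes E': "E' \<in> face_chains (n - l) k" and l: "l \<in> {1..n}" and p: "p \<le> l"
  shows "extend_chain l p E' \<in> face_chains n (Suc k)"
proof -
  obtain s' where s': "E' \<subseteq> path_chain (n - l) s'" "card E' = k" using E'
    unfolding face_chains_def by blast
  define s where "s j = (if j < p then True else if j < l then False else s' (j - l))" for j
  have pl: "path_pt s l = (p, l - p)" using path_pt_prefix[of l l p s'] p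
    by (simp add: s_def[abs_def] min_def)
  have sh: "(\<lambda>j. s (j + l)) = s'" using p by (auto simp: s_def fun_eq_iff)
  have pm: "path_pt s (l + m) = shift_pair p (l - p) (path_pt s' m)" for m
    using path_pt_add[of s l m] pl sh by (simp add: shift_pair_def add.commute)
  have sub: "extend_chain l p E' \<subseteq> path_chain n s"
  proof
    fix e assume "e \<in> extend_chain l p E'"
    then consider "e = (p, l - p)" | "e \<in> shift_pair p (l - p) ` E'"
      by (auto simp: extend_chain_def)
    then show "e \<in> path_chain n s"
    proof cases
      case 1 then show ?thesis using pl l unfolding path_chain_def by (metis imageI)
    next
      case 2
      then obtain e' where e': "e' \<in> E'" "e = shift_pair p (l - p) e'" by blast
      then obtain m where m: "m \<in> {1..n - l}" "e' = path_pt s' m" using s'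
        by (auto simp: path_chain_def)
      then have "e = path_pt s (l + m)" using e' pm by simp
      moreover have "l + m \<in> {1..n}" using m l by auto
      ultimately show ?thesis unfolding path_chain_def by blast
    qed
  qed
  have "card (extend_chain l p E') = Suc k"
    using card_extend_chain[OF face_chains_subset_ray_index[OF E'] face_chains_finite[OF E']] s'(2)
    by simp
  then show ?thesis unfolding face_chains_def using sub by blast
qed

lemma extend_chain_surj:
  assumes E: "E \<in> face_chains n (Suc k)"
  shows "\<exists>l p E'. l \<in> {1..n} \<and> p \<le> l \<and> E' \<in> face_chains (n - l) k \<and>
           E = extend_chain l p E'"
proof -
  obtain s where s: "E \<subseteq> path_chain n s" "card E = Suc k" using E
    unfolding face_chains_def by blast
  define J where "J = {m\<in>{1..n}. path_pt s m \<in> E}"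
  have EJ: "E = path_pt s ` J" using subset_path_chain_eq_image[OF s(1)] by (simp add: J_def)
  have Jne: "J \<noteq> {}" using EJ s(2) by auto
  have finJ: "finite J" by (simp add: J_def)
  define l where "l = Min J"
  have lJ: "l \<in> J" using finJ Jne l_def by simp
  have lmin: "\<forall>m\<in>J. l \<le> m" using finJ l_def by simp
  have l1: "l \<in> {1..n}" using lJ by (simp add: J_def)
  define p where "p = fst (path_pt s l)"
  have pl: "path_pt s l = (p, l - p)" using path_pt_sum[of s l] by (simp add: p_def prod_eq_iff)
  have ple: "p \<le> l" using path_pt_sum[of s l] by (simp add: p_def)
  define s' where "s' j = s (j + l)" for j
  define E' where "E' = (\<lambda>m. path_pt s' (m - l)) ` (J - {l})"
  have pm: "path_pt s m = shift_pair p (l - p) (path_pt s' (m - l))" if "l \<le> m" for m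
    using path_pt_add[of s l "m - l"] pl that by (simp add: shift_pair_def s'_def[abs_def])
  have sub': "E' \<subseteq> path_chain (n - l) s'"
  proof
    fix e assume "e \<in> E'"
    then obtain m where m: "m \<in> J - {l}" "e = path_pt s' (m - l)" by (auto simp: E'_def)
    then have "l < m" "m \<le> n" using lmin by (auto simp: J_def order_le_less)
    then have "m - l \<in> {1..n - l}" by auto
    then show "e \<in> path_chain (n - l) s'" using m unfolding path_chain_def by blast
  qed
  have E_eq: "E = extend_chain l p E'"
  proof -
    have "E = insert (path_pt s l) (path_pt s ` (J - {l}))" using EJ lJ by blast
    also have "path_pt s ` (J - {l}) = shift_pair p (l - p) ` E'"
    proof -
      have "path_pt s ` (J - {l}) =
            (\<lambda>m. shift_pair p (l - p) (path_pt s' (m - l))) ` (J - {l})"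
        using pm lmin by (intro image_cong refl) auto
      then show ?thesis unfolding E'_def by (simp add: image_image)
    qed
    finally show ?thesis using pl by (simp add: extend_chain_def)
  qed
  have "card E = Suc (card E')"
    unfolding E_eq using card_extend_chain sub' path_chain_ray_index finJ
    by (metis E'_def finite_Diff finite_imageI subset_trans)
  then have "card E' = k" using s(2) by simp
  then have "E' \<in> face_chains (n - l) k" unfolding face_chains_def using sub' by blast
  then show ?thesis using l1 ple E_eq by blast
qed

lemma card_face_chains_Suc:
  "card (face_chains n (Suc k)) = (\<Sum>l\<in>{1..n}. (l + 1) * card (face_chains (n - l) k))"
proof -
  let ?I = "SIGMA l:{1..n}. {0..l}"
  let ?B = "SIGMA i:?I. face_chains (n - fst i) k"
  let ?f = "\<lambda>(i, E'). extend_chain (fst i) (snd i) E'"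
  have inj: "inj_on ?f ?B"
  proof (rule inj_onI)
    fix x y assume xy: "x \<in> ?B" "y \<in> ?B" "?f x = ?f y"
    obtain l1 p1 E1 where x: "x = ((l1, p1), E1)" by (metis prod.exhaust)
    obtain l2 p2 E2 where y: "y = ((l2, p2), E2)" by (metis prod.exhaust)
    have "E1 \<in> face_chains (n - l1) k" "E2 \<in> face_chains (n - l2) k"
      "p1 \<le> l1" "1 \<le> l1" "p2 \<le> l2" "1 \<le> l2"
      "extend_chain l1 p1 E1 = extend_chain l2 p2 E2"
      using xy by (auto simp: x y)
    then have "l1 = l2 \<and> p1 = p2 \<and> E1 = E2" by (rule extend_chain_inj)
    then show "x = y" by (simp add: x y)
  qed
  have img: "?f ` ?B = face_chains n (Suc k)"
  proof
    show "?f ` ?B \<subseteq> face_chains n (Suc k)"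
    proof (rule image_subsetI)
      fix x assume "x \<in> ?B"
      moreover obtain l p E' where "x = ((l, p), E')" by (metis prod.exhaust)
      ultimately have "E' \<in> face_chains (n - l) k" "l \<in> {1..n}" "p \<le> l" "?f x = extend_chain l p E'"
        by auto
      then show "?f x \<in> face_chains n (Suc k)" using extend_chain_in by simp
    qed
    show "face_chains n (Suc k) \<subseteq> ?f ` ?B"
    proof
      fix E assume "E \<in> face_chains n (Suc k)"
      then obtain l p E' where "l \<in> {1..n}" "p \<le> l" "E' \<in> face_chains (n - l) k"
          "E = extend_chain l p E'"
        using extend_chain_surj by blast
      then show "E \<in> ?f ` ?B" by (intro image_eqI[of _ _ "((l, p), E')"]) auto
    qed
  qed
  have "card (face_chains n (Suc k)) = card ?B"
    using card_image[OF inj] img by simp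
  also have "\<dots> = (\<Sum>i\<in>?I. card (face_chains (n - fst i) k))"
    by (rule card_SigmaI) (auto simp: finite_face_chains)
  also have "\<dots> = (\<Sum>(l, p)\<in>?I. card (face_chains (n - l) k))"
    by (simp add: split_beta)
  also have "\<dots> = (\<Sum>l\<in>{1..n}. \<Sum>p\<in>{0..l}. card (face_chains (n - l) k))"
    by (rule sum.Sigma[symmetric]) auto
  also have "\<dots> = (\<Sum>l\<in>{1..n}. (l + 1) * card (face_chains (n - l) k))" by simp
  finally show ?thesis .
qed

lemma card_face_chains_Suc_bounded:
  "card (face_chains n (Suc k)) = (\<Sum>l = 1..n - k. (l + 1) * card (face_chains (n - l) k))"
proof -
  have "(\<Sum>l = 1..n. (l + 1) * card (face_chains (n - l) k))
      = (\<Sum>l = 1..n - k. (l + 1) * card (face_chains (n - l) k))"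
    by (rule sum.mono_neutral_right) (auto simp: face_chains_empty)
  then show ?thesis by (simp add: card_face_chains_Suc)
qed

lemma g_eq_card: "g (int n) (int k) = int (card (face_chains n k))"
  by (auto simp: g_def num_kfaces_eq_card face_chains_empty)

lemma g_neg: "k < 0 \<Longrightarrow> g n k = 0"
  by (simp add: g_def)

lemma int_image_atLeastAtMost_diff: "int ` {1..n - k} = {1..int n - int k}"
  by (cases "k \<le> n") (auto simp: image_int_atLeastAtMost of_nat_diff)

lemma g_Suc:
  "g (int n) (int (Suc k)) = (\<Sum>l = 1..int n - int k. (l + 1) * g (int n - l) (int k))"
proof -
  have "g (int n) (int (Suc k)) = int (card (face_chains n (Suc k)))"
    by (rule g_eq_card)
  also have "\<dots> = (\<Sum>l = 1..n - k. (int l + 1) * int (card (face_chains (n - l) k)))"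
    by (simp add: card_face_chains_Suc_bounded of_nat_sum algebra_simps)
  also have "\<dots> = (\<Sum>l = 1..n - k. (int l + 1) * g (int n - int l) (int k))"
    by (intro sum.cong refl) (auto simp: g_eq_card[symmetric] of_nat_diff)
  also have "\<dots> = (\<Sum>l \<in> int ` {1..n - k}. (l + 1) * g (int n - l) (int k))"
    by (simp add: sum.reindex)
  also have "int ` {1..n - k} = {1..int n - int k}"
    by (rule int_image_atLeastAtMost_diff)
  finally show ?thesis .
qed

theorem proposition4p1:
  fixes n k :: int
  assumes "n \<ge> 0"
  shows "g n k = (if k = 0 then 1 else 0) + (\<Sum>l = 1..n - k + 1. (l + 1) * g (n - l) (k - 1))"
proof -
  obtain N where N: "n = int N" using assms nonneg_int_cases by blast
  consider (neg) "k < 0" | (zero) "k = 0" | (pos) K where "k = int (Suc K)"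
  proof -
    have "\<exists>K. k = int (Suc K)" if "0 < k" using that by (intro exI[of _ "nat (k - 1)"]) simp
    then show thesis using that by (cases "k < 0"; cases "k = 0") auto
  qed
  then show ?thesis
  proof cases
    case neg
    then show ?thesis by (simp add: g_neg)
  next
    case zero
    have "g n 0 = 1" using g_eq_card[of N 0] by (simp add: N face_chains_0)
    then show ?thesis using zero by (simp add: g_neg)
  next
    case pos
    then show ?thesis using g_Suc[of N K] by (simp add: N algebra_simps)
  qed
qed

end
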